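(* Let $L_0$ satisfy the standing assumptions and let $(\gamma(e))$ be as below. For every $A>0$, as $n\to+\infty$: (1) $\displaystyle\sup_{x\in[-A,A]\cap2^{-n}\mathbb Z}\Big|\operatorname{sgn}(x)\frac12\sum_{i=1}^{2^n|x|}\gamma\big(\{\operatorname{sgn}(x)2^{-n}(i-1),\operatorname{sgn}(x)2^{-n}i\}\big)^{-1}-S_0(x)\Big|\to0$ in probability, where $S_0(x)=\int_0^xL_0(r)^{-2}dr$; (2) $\displaystyle\sup_{x\in[-A,A]\cap2^{-n}\mathbb Z}\Big|\operatorname{sgn}(x)2^{-2n+1}\sum_{i=1}^{2^n|x|}\gamma\big(\{\operatorname{sgn}(x)2^{-n}(i-1),\operatorname{sgn}(x)2^{-n}i\}\big)-\int_0^xL_0(r)^2dr\Big|\to0$ in probability. (Empty sums are $0$.)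
   Context: Standing assumptions: $L_0:\mathbb R\to(0,+\infty)$ continuous with $\int_0^{+\infty}L_0^{-2}=\int_{-\infty}^0L_0^{-2}=+\infty$. For each $n$, $(\gamma(\{x-2^{-n},x\}))_{x\in2^{-n}\mathbb Z}$ are independent random variables indexed by the edges of $2^{-n}\mathbb Z$, with $\gamma(\{x-2^{-n},x\})$ Gamma-distributed with shape parameter $2^{n-1}L_0(x-2^{-n})L_0(x)$ and scale parameter $1$. *)

theory Defs
  imports "HOL-Probability.Probability"
begin

definition gamma_density :: "real \<Rightarrow> real \<Rightarrow> real" where
  "gamma_density a x = (if x > 0 then x powr (a - 1) * exp (- x) / Gamma a else 0)"

definition dyadic :: "nat \<Rightarrow> real set" where
  "dyadic n = {real_of_int k / 2 ^ n | k. True}"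

definition dyadic_edges :: "nat \<Rightarrow> real set set" where
  "dyadic_edges n = {{x - 1 / 2 ^ n, x} | x. x \<in> dyadic n}"

definition standing_L0 :: "(real \<Rightarrow> real) \<Rightarrow> bool" where
  "standing_L0 L0 \<longleftrightarrow> continuous_on UNIV L0 \<and> (\<forall>x. L0 x > 0) \<and>
     (\<integral>\<^sup>+ r. indicator {0..} r * ennreal (1 / L0 r ^ 2) \<partial>lborel) = \<infinity> \<and>
     (\<integral>\<^sup>+ r. indicator {..0} r * ennreal (1 / L0 r ^ 2) \<partial>lborel) = \<infinity>"

definition tendsto_in_prob_zero :: "'a measure \<Rightarrow> (nat \<Rightarrow> 'a \<Rightarrow> real) \<Rightarrow> bool" where
  "tendsto_in_prob_zero M Y \<longleftrightarrow>
     (\<forall>\<epsilon>>0. (\<lambda>n. measure M {\<omega> \<in> space M. \<bar>Y n \<omega>\<bar> > \<epsilon>}) \<longlonglongrightarrow> 0)"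

end

theory Submission
  imports Defs
begin

(* On each side of the origin the rescaled edge weights are independent and nonnegative, with
   means of order 2^-n and variances of order 4^-n, because a Gamma(a) variable has
   E X = a, E X^2 = a (a + 1), E X^-1 = 1 / (a - 1) and E X^-2 = 1 / ((a - 1) (a - 2)).
   Partial sums of nonnegative terms are monotone in the number of terms, so Chebyshev's
   inequality at boundedly many evenly spaced indices controls all centred partial sums at once.
   The means themselves are Riemann sums of L0^2, resp. L0^-2, on the dyadic grid, which converge
   uniformly on [-A, A] by uniform continuity of L0. *)


section \<open>Moments of Gamma variables\<close>

lemma gamma_distributed_powr_moment:
  fixes X :: "'a \<Rightarrow> real"
  assumes D: "distributed M lborel X (\<lambda>t. ennreal (gamma_density a t))"
    and a: "a > 0" and ab: "a + b > 0"
  shows "integrable M (\<lambda>\<omega>. if X \<omega> > 0 then X \<omega> powr b else 0)"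
    and "(\<integral>\<omega>. (if X \<omega> > 0 then X \<omega> powr b else 0) \<partial>M) = Gamma (a + b) / Gamma a"
proof -
  note [measurable] = distributed_measurable[OF D, simplified]
  have Ga: "Gamma a > 0" and Gab: "Gamma (a + b) > 0" using a ab by simp_all
  define g where "g x = (if x > 0 then x powr b else 0)" for x :: real
  have density_times_g: "ennreal (gamma_density a x) * ennreal (g x)
      = ennreal (1 / Gamma a) * ennreal (indicator {0..} x * x powr (a + b - 1) / exp x)" for x
  proof (cases "x > 0")
    case True
    have "gamma_density a x * g x = 1 / Gamma a * (indicator {0..} x * x powr (a + b - 1) / exp x)"
      using True by (simp add: gamma_density_def g_def powr_add[symmetric] exp_minus field_simps)
    then show ?thesis using True Ga by (simp add: ennreal_mult'[symmetric] gamma_density_def g_def)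
  next
    case False
    then show ?thesis by (cases "x = 0") (auto simp: gamma_density_def g_def indicator_def)
  qed
  have "(\<integral>\<^sup>+\<omega>. ennreal (g (X \<omega>)) \<partial>M) = (\<integral>\<^sup>+x. ennreal (gamma_density a x) * ennreal (g x) \<partial>lborel)"
    using distributed_nn_integral[OF D, of "\<lambda>x. ennreal (g x)"] by (simp add: g_def)
  also have "\<dots> = ennreal (1 / Gamma a) * (\<integral>\<^sup>+x. ennreal (indicator {0..} x * x powr (a + b - 1) / exp x) \<partial>lborel)"
    unfolding density_times_g by (rule nn_integral_cmult) measurable
  also have "\<dots> = ennreal (1 / Gamma a) * ennreal (Gamma (a + b))"
    using Gamma_conv_nn_integral_real[OF ab] by simp
  also have "\<dots> = ennreal (Gamma (a + b) / Gamma a)"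
    using Ga Gab by (simp add: ennreal_mult'[symmetric])
  finally have nn: "(\<integral>\<^sup>+\<omega>. ennreal (g (X \<omega>)) \<partial>M) = ennreal (Gamma (a + b) / Gamma a)" .
  have nonneg: "AE \<omega> in M. 0 \<le> g (X \<omega>)" by (auto simp: g_def)
  show "integrable M (\<lambda>\<omega>. if X \<omega> > 0 then X \<omega> powr b else 0)"
    using integrableI_nn_integral_finite[OF _ nonneg nn] by (simp add: g_def)
  show "(\<integral>\<omega>. (if X \<omega> > 0 then X \<omega> powr b else 0) \<partial>M) = Gamma (a + b) / Gamma a"
    using integral_eq_nn_integral[OF _ nonneg] nn Ga Gab by (simp add: g_def)
qed

lemma gamma_distributed_AE_pos:
  fixes X :: "'a \<Rightarrow> real"
  assumes D: "distributed M lborel X (\<lambda>t. ennreal (gamma_density a t))"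
  shows "AE \<omega> in M. X \<omega> > 0"
proof -
  note [measurable] = distributed_measurable[OF D, simplified]
  have "emeasure M (X -` {..0} \<inter> space M) = (\<integral>\<^sup>+x. ennreal (gamma_density a x) * indicator {..0} x \<partial>lborel)"
    using distributed_emeasure[OF D, of "{..0}"] by simp
  also have "\<dots> = (\<integral>\<^sup>+(x::real). 0 \<partial>lborel)"
    by (intro nn_integral_cong) (simp add: gamma_density_def indicator_def)
  finally have "emeasure M {\<omega> \<in> space M. X \<omega> \<le> 0} = 0"
    by (simp add: vimage_def Int_def conj_commute)
  then show ?thesis
    by (intro AE_I'[of "{\<omega> \<in> space M. X \<omega> \<le> 0}"]) (auto simp: null_sets_def)
qed

lemma gamma_distributed_moments:
  fixes X :: "'a \<Rightarrow> real"
  assumes D: "distributed M lborel X (\<lambda>t. ennreal (gamma_density a t))" and a: "a > 0"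
  shows "integrable M (\<lambda>\<omega>. (X \<omega>)\<^sup>2)" "integrable M X"
    "(\<integral>\<omega>. X \<omega> \<partial>M) = a" "(\<integral>\<omega>. (X \<omega>)\<^sup>2 \<partial>M) = a * (a + 1)"
proof -
  note [measurable] = distributed_measurable[OF D, simplified]
  have pos: "AE \<omega> in M. X \<omega> > 0" by (rule gamma_distributed_AE_pos[OF D])
  have e1: "AE \<omega> in M. (if X \<omega> > 0 then X \<omega> powr 1 else 0) = X \<omega>"
    using pos by eventually_elim auto
  have e2: "AE \<omega> in M. (if X \<omega> > 0 then X \<omega> powr 2 else 0) = (X \<omega>)\<^sup>2"
    using pos by eventually_elim (auto simp: powr_realpow)
  have not_nonpos_Int: "x \<notin> \<int>\<^sub>\<le>\<^sub>0" if "x > 0" for x :: real using that by (auto dest: nonpos_Ints_nonpos)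
  have g1: "Gamma (a + 1) = a * Gamma a" using Gamma_plus1[OF not_nonpos_Int[OF a]] .
  have g2: "Gamma (a + 2) = (a + 1) * a * Gamma a"
    using Gamma_plus1[OF not_nonpos_Int[of "a + 1"]] g1 a by (simp add: add.assoc)
  have Ga: "Gamma a \<noteq> 0" using a by (simp add: less_imp_neq[symmetric])
  note m1 = gamma_distributed_powr_moment[OF D a, of 1] and m2 = gamma_distributed_powr_moment[OF D a, of 2]
  show "integrable M (\<lambda>\<omega>. (X \<omega>)\<^sup>2)" using m2(1) a integrable_cong_AE[OF _ _ e2] by simp
  show "integrable M X" using m1(1) a integrable_cong_AE[OF _ _ e1] by simp
  show "(\<integral>\<omega>. X \<omega> \<partial>M) = a" using m1(2) a integral_cong_AE[OF _ _ e1] g1 Ga by simp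
  show "(\<integral>\<omega>. (X \<omega>)\<^sup>2 \<partial>M) = a * (a + 1)" using m2(2) a integral_cong_AE[OF _ _ e2] g2 Ga by simp
qed

lemma gamma_distributed_inverse_moments:
  fixes X :: "'a \<Rightarrow> real"
  assumes D: "distributed M lborel X (\<lambda>t. ennreal (gamma_density a t))" and a: "a > 2"
  shows "integrable M (\<lambda>\<omega>. (1 / X \<omega>)\<^sup>2)" "integrable M (\<lambda>\<omega>. 1 / X \<omega>)"
    "(\<integral>\<omega>. 1 / X \<omega> \<partial>M) = 1 / (a - 1)"
    "(\<integral>\<omega>. (1 / X \<omega>)\<^sup>2 \<partial>M) = 1 / ((a - 1) * (a - 2))"
proof -
  note [measurable] = distributed_measurable[OF D, simplified]
  have a0: "a > 0" using a by simp
  have pos: "AE \<omega> in M. X \<omega> > 0" by (rule gamma_distributed_AE_pos[OF D])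
  have e1: "AE \<omega> in M. (if X \<omega> > 0 then X \<omega> powr (-1) else 0) = 1 / X \<omega>"
    using pos by eventually_elim (auto simp: powr_minus_divide)
  have e2: "AE \<omega> in M. (if X \<omega> > 0 then X \<omega> powr (-2) else 0) = (1 / X \<omega>)\<^sup>2"
    using pos by eventually_elim (auto simp: powr_minus_divide powr_realpow power_one_over)
  have not_nonpos_Int: "x \<notin> \<int>\<^sub>\<le>\<^sub>0" if "x > 0" for x :: real using that by (auto dest: nonpos_Ints_nonpos)
  have g1: "Gamma a = (a - 1) * Gamma (a + - 1)"
    using Gamma_plus1[OF not_nonpos_Int[of "a - 1"]] a by simp
  have g2: "Gamma (a + - 1) = (a - 2) * Gamma (a + - 2)"
    using Gamma_plus1[OF not_nonpos_Int[of "a - 2"]] a by simp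
  have "Gamma (a - 1) > 0" "Gamma (a - 2) > 0" using a by (simp_all add: Gamma_real_pos)
  then have G: "Gamma (a + - 1) \<noteq> 0" "Gamma (a + - 2) \<noteq> 0" by simp_all
  note m1 = gamma_distributed_powr_moment[OF D a0, of "-1"]
    and m2 = gamma_distributed_powr_moment[OF D a0, of "-2"]
  show "integrable M (\<lambda>\<omega>. (1 / X \<omega>)\<^sup>2)" using m2(1) a integrable_cong_AE[OF _ _ e2] by simp
  show "integrable M (\<lambda>\<omega>. 1 / X \<omega>)" using m1(1) a integrable_cong_AE[OF _ _ e1] by simp
  show "(\<integral>\<omega>. 1 / X \<omega> \<partial>M) = 1 / (a - 1)" using m1(2) a integral_cong_AE[OF _ _ e1] g1 G by simp
  show "(\<integral>\<omega>. (1 / X \<omega>)\<^sup>2 \<partial>M) = 1 / ((a - 1) * (a - 2))"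
    using m2(2) a integral_cong_AE[OF _ _ e2] g1 g2 G by simp
qed

lemma scaled_gamma_moment_bounds:
  fixes N a B :: real
  assumes N: "N \<ge> 1" and a: "0 < a" "a \<le> N / 2 * B"
  shows "2 / (N * N) * a \<le> B / N" and "(2 / (N * N))\<^sup>2 * (a * (a + 1)) \<le> (B\<^sup>2 + 2 * B) / (N * N)"
proof -
  have B: "0 < B" using a N by (smt (verit) divide_nonneg_nonneg mult_nonneg_nonpos)
  have "2 / (N * N) * a \<le> 2 / (N * N) * (N / 2 * B)" using a N by (intro mult_left_mono) auto
  also have "\<dots> = B / N" using N by (simp add: field_simps)
  finally show "2 / (N * N) * a \<le> B / N" .
  have "a * (a + 1) \<le> (N / 2 * B) * (N / 2 * B + 1)" using a by (intro mult_mono) auto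
  then have "(2 / (N * N))\<^sup>2 * (a * (a + 1)) \<le> (2 / (N * N))\<^sup>2 * ((N / 2 * B) * (N / 2 * B + 1))"
    by (intro mult_left_mono) auto
  also have "\<dots> = B\<^sup>2 / (N * N) + 2 * B / (N * N * N)" using N by (simp add: field_simps power2_eq_square)
  also have "\<dots> \<le> B\<^sup>2 / (N * N) + 2 * B / (N * N)"
    using B N by (intro add_left_mono divide_left_mono) (auto simp: mult_le_cancel_left1)
  finally show "(2 / (N * N))\<^sup>2 * (a * (a + 1)) \<le> (B\<^sup>2 + 2 * B) / (N * N)" by (simp add: add_divide_distrib)
qed

lemma inverse_shape_moment_bounds:
  fixes a b :: real and n :: nat
  assumes "a \<ge> 4" "a \<ge> 2^n * b" "b > 0"
  shows "1 / 2 * (1 / (a - 1)) \<le> (1 / b) / 2^n"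
    and "(1 / 2)\<^sup>2 * (1 / ((a - 1) * (a - 2))) \<le> (1 / b)\<^sup>2 / 4^n"
proof -
  have "(2::real)^n * b > 0" using assms by simp
  have "1 / 2 * (1 / (a - 1)) \<le> 1 / a" using assms by (simp add: field_simps)
  also have "\<dots> \<le> 1 / (2^n * b)" using assms \<open>2^n * b > 0\<close> by (intro divide_left_mono) auto
  finally show "1 / 2 * (1 / (a - 1)) \<le> (1 / b) / 2^n" by (simp add: mult.commute)
  have "a / 2 * (a / 2) \<le> (a - 1) * (a - 2)" using assms by (intro mult_mono) auto
  then have "(1 / 2)\<^sup>2 * (1 / ((a - 1) * (a - 2))) \<le> 1 / (a * a)"
    using assms by (simp add: field_simps power2_eq_square)
  also have "\<dots> \<le> 1 / ((2^n * b) * (2^n * b))"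
    using assms \<open>2^n * b > 0\<close> by (intro divide_left_mono mult_mono) auto
  also have "\<dots> = (1 / b)\<^sup>2 / 4^n" by (simp add: power2_eq_square power_mult_distrib[symmetric])
  finally show "(1 / 2)\<^sup>2 * (1 / ((a - 1) * (a - 2))) \<le> (1 / b)\<^sup>2 / 4^n" .
qed

section \<open>Sums of independent variables\<close>

lemma integrable_mult_of_square_integrable:
  fixes X Y :: "'a \<Rightarrow> real"
  assumes "integrable M (\<lambda>\<omega>. (X \<omega>)\<^sup>2)" "integrable M (\<lambda>\<omega>. (Y \<omega>)\<^sup>2)"
    and [measurable]: "X \<in> borel_measurable M" "Y \<in> borel_measurable M"
  shows "integrable M (\<lambda>\<omega>. X \<omega> * Y \<omega>)"
proof (rule Bochner_Integration.integrable_bound[where f="\<lambda>\<omega>. (X \<omega>)\<^sup>2 + (Y \<omega>)\<^sup>2"])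
  show "integrable M (\<lambda>\<omega>. (X \<omega>)\<^sup>2 + (Y \<omega>)\<^sup>2)" using assms by auto
  show "(\<lambda>\<omega>. X \<omega> * Y \<omega>) \<in> borel_measurable M" by measurable
  show "AE \<omega> in M. norm (X \<omega> * Y \<omega>) \<le> norm ((X \<omega>)\<^sup>2 + (Y \<omega>)\<^sup>2)"
  proof (intro AE_I2)
    fix \<omega>
    have "\<bar>X \<omega>\<bar> * \<bar>Y \<omega>\<bar> \<le> (X \<omega>)\<^sup>2 + (Y \<omega>)\<^sup>2"
      using sum_squares_bound[of "\<bar>X \<omega>\<bar>" "\<bar>Y \<omega>\<bar>"] mult_nonneg_nonneg[OF abs_ge_zero abs_ge_zero, of "X \<omega>" "Y \<omega>"]
      unfolding power2_abs by linarith
    then show "norm (X \<omega> * Y \<omega>) \<le> norm ((X \<omega>)\<^sup>2 + (Y \<omega>)\<^sup>2)" by (simp add: abs_mult)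
  qed
qed

lemma (in prob_space) variance_sum_indep:
  fixes X :: "'i \<Rightarrow> 'a \<Rightarrow> real"
  assumes fin: "finite I" and ind: "indep_vars (\<lambda>_. borel) X I"
    and sq: "\<And>i. i \<in> I \<Longrightarrow> integrable M (\<lambda>\<omega>. (X i \<omega>)\<^sup>2)"
  shows "integrable M (\<lambda>\<omega>. (\<Sum>i\<in>I. X i \<omega>)\<^sup>2)"
    and "variance (\<lambda>\<omega>. \<Sum>i\<in>I. X i \<omega>) = (\<Sum>i\<in>I. variance (X i))"
proof -
  have meas[measurable]: "\<And>i. i \<in> I \<Longrightarrow> X i \<in> borel_measurable M"
    using ind by (auto simp: indep_vars_def)
  have int: "\<And>i. i \<in> I \<Longrightarrow> integrable M (X i)"
    using sq meas square_integrable_imp_integrable by blast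
  have prod: "integrable M (\<lambda>\<omega>. X i \<omega> * X j \<omega>)" if "i \<in> I" "j \<in> I" for i j
    using that sq meas by (intro integrable_mult_of_square_integrable) auto
  have square_sum: "(\<Sum>i\<in>I. f i)\<^sup>2 = (\<Sum>i\<in>I. \<Sum>j\<in>I. f i * f j)" for f :: "'i \<Rightarrow> real"
    by (simp add: power2_eq_square sum_product)
  show "integrable M (\<lambda>\<omega>. (\<Sum>i\<in>I. X i \<omega>)\<^sup>2)"
    unfolding square_sum using prod by auto
  define Y where "Y i \<omega> = X i \<omega> - expectation (X i)" for i \<omega>
  have Yint: "\<And>i. i \<in> I \<Longrightarrow> integrable M (Y i)" unfolding Y_def using int by auto
  have Yprod: "integrable M (\<lambda>\<omega>. Y i \<omega> * Y j \<omega>)" if "i \<in> I" "j \<in> I" for i j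
    unfolding Y_def using prod[OF that] int that by (simp add: algebra_simps)
  have Yind: "indep_vars (\<lambda>_. borel) Y I"
    unfolding Y_def using indep_vars_compose2[OF ind, of "\<lambda>i t. t - expectation (X i)" "\<lambda>_. borel"]
    by auto
  have uncorrelated: "expectation (\<lambda>\<omega>. Y i \<omega> * Y j \<omega>) = (if i = j then variance (X i) else 0)"
    if "i \<in> I" "j \<in> I" for i j
  proof (cases "i = j")
    case True then show ?thesis by (simp add: Y_def power2_eq_square)
  next
    case False
    have "indep_vars (\<lambda>_. borel) Y {i, j}" using indep_vars_subset[OF Yind] that by auto
    then have "expectation (\<lambda>\<omega>. \<Prod>l\<in>{i,j}. Y l \<omega>) = (\<Prod>l\<in>{i,j}. expectation (Y l))"
      using indep_vars_lebesgue_integral[of "{i,j}" Y] Yint that by auto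
    moreover have "expectation (Y l) = 0" if "l \<in> I" for l unfolding Y_def using int that prob_space by auto
    ultimately show ?thesis using False that by simp
  qed
  have "expectation (\<lambda>\<omega>. \<Sum>i\<in>I. X i \<omega>) = (\<Sum>i\<in>I. expectation (X i))"
    using int by (simp add: integral_sum)
  then have "variance (\<lambda>\<omega>. \<Sum>i\<in>I. X i \<omega>) = expectation (\<lambda>\<omega>. (\<Sum>i\<in>I. Y i \<omega>)\<^sup>2)"
    unfolding Y_def by (simp add: sum_subtractf)
  also have "\<dots> = (\<Sum>i\<in>I. \<Sum>j\<in>I. expectation (\<lambda>\<omega>. Y i \<omega> * Y j \<omega>))"
    unfolding square_sum using Yprod by (simp add: integral_sum integrable_sum)
  also have "\<dots> = (\<Sum>i\<in>I. \<Sum>j\<in>I. if i = j then variance (X i) else 0)"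
    using uncorrelated by (intro sum.cong refl) auto
  also have "\<dots> = (\<Sum>i\<in>I. variance (X i))"
    using fin by simp
  finally show "variance (\<lambda>\<omega>. \<Sum>i\<in>I. X i \<omega>) = (\<Sum>i\<in>I. variance (X i))" .
qed

lemma (in prob_space) Chebyshev_inequality_sum_indep:
  fixes X :: "'i \<Rightarrow> 'a \<Rightarrow> real"
  assumes "finite I" and ind: "indep_vars (\<lambda>_. borel) X I"
    and sq: "\<And>i. i \<in> I \<Longrightarrow> integrable M (\<lambda>\<omega>. (X i \<omega>)\<^sup>2)" and "\<epsilon> > 0"
  shows "prob {\<omega> \<in> space M. \<epsilon> \<le> \<bar>(\<Sum>i\<in>I. X i \<omega>) - (\<Sum>i\<in>I. expectation (X i))\<bar>}
      \<le> (\<Sum>i\<in>I. variance (X i)) / \<epsilon>\<^sup>2"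
proof -
  have meas[measurable]: "\<And>i. i \<in> I \<Longrightarrow> X i \<in> borel_measurable M"
    using ind by (auto simp: indep_vars_def)
  have "expectation (\<lambda>\<omega>. \<Sum>i\<in>I. X i \<omega>) = (\<Sum>i\<in>I. expectation (X i))"
    using sq meas square_integrable_imp_integrable by (intro Bochner_Integration.integral_sum) blast
  then show ?thesis
    using Chebyshev_inequality[of "\<lambda>\<omega>. \<Sum>i\<in>I. X i \<omega>" \<epsilon>] variance_sum_indep[OF assms(1-3)] \<open>\<epsilon> > 0\<close>
    by simp
qed

lemma (in prob_space) scaled_variance_le_second_moment:
  fixes X :: "'a \<Rightarrow> real"
  assumes X2: "integrable M (\<lambda>\<omega>. (X \<omega>)\<^sup>2)" and X: "integrable M X"
  shows "integrable M (\<lambda>\<omega>. (\<kappa> * X \<omega>)\<^sup>2)"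
    and "variance (\<lambda>\<omega>. \<kappa> * X \<omega>) \<le> \<kappa>\<^sup>2 * expectation (\<lambda>\<omega>. (X \<omega>)\<^sup>2)"
proof -
  have sq: "(\<lambda>\<omega>. (\<kappa> * X \<omega>)\<^sup>2) = (\<lambda>\<omega>. \<kappa>\<^sup>2 * (X \<omega>)\<^sup>2)" by (simp add: power_mult_distrib)
  show int: "integrable M (\<lambda>\<omega>. (\<kappa> * X \<omega>)\<^sup>2)" unfolding sq using X2 by simp
  have "variance (\<lambda>\<omega>. \<kappa> * X \<omega>) = expectation (\<lambda>\<omega>. (\<kappa> * X \<omega>)\<^sup>2) - (expectation (\<lambda>\<omega>. \<kappa> * X \<omega>))\<^sup>2"
    using X int by (intro variance_eq) auto
  also have "\<dots> \<le> \<kappa>\<^sup>2 * expectation (\<lambda>\<omega>. (X \<omega>)\<^sup>2)" unfolding sq by simp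
  finally show "variance (\<lambda>\<omega>. \<kappa> * X \<omega>) \<le> \<kappa>\<^sup>2 * expectation (\<lambda>\<omega>. (X \<omega>)\<^sup>2)" .
qed

section \<open>A maximal inequality for partial sums of nonnegative variables\<close>

lemma partial_sum_deviation_le_grid:
  fixes z \<mu> :: "nat \<Rightarrow> real" and K s J k :: nat and h \<epsilon> :: real
  assumes z: "\<And>i. i \<in> {1..K} \<Longrightarrow> 0 \<le> z i"
    and \<mu>: "\<And>i. i \<in> {1..K} \<Longrightarrow> 0 \<le> \<mu> i \<and> \<mu> i \<le> h"
    and s: "s \<ge> 1" "K \<le> J * s"
    and grid: "\<And>j. j \<le> J + 1 \<Longrightarrow>
        \<bar>sum z {1..min (j * s) K} - sum \<mu> {1..min (j * s) K}\<bar> < \<epsilon> / 2"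
    and sh: "real s * h \<le> \<epsilon> / 2"
    and k: "k \<le> K"
  shows "\<bar>sum z {1..k} - sum \<mu> {1..k}\<bar> \<le> \<epsilon>"
proof -
  define j where "j = k div s"
  define a where "a = min (j * s) K"
  define b where "b = min ((j + 1) * s) K"
  have "k = j * s + k mod s" "k mod s < s" unfolding j_def using s(1) by simp_all
  then have "j * s \<le> k" "k < (j + 1) * s" by (linarith, simp)
  moreover have "j \<le> J"
    using div_le_mono[OF order_trans[OF k s(2)], of s] s(1) unfolding j_def by simp
  ultimately have ab: "a \<le> k" "k \<le> b" "b \<le> K" "b - a \<le> s" "j + 1 \<le> J + 1"
    using k unfolding a_def b_def by (auto simp: algebra_simps)
  have mono: "sum f {1..p} \<le> sum f {1..q}" if "p \<le> q" "q \<le> K" "\<And>i. i \<in> {1..K} \<Longrightarrow> 0 \<le> f i"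
    for f :: "nat \<Rightarrow> real" and p q
    using that by (intro sum_mono2) auto
  have "sum \<mu> {1..b} - sum \<mu> {1..a} \<le> \<epsilon> / 2"
  proof (cases "K = 0")
    case True
    then show ?thesis using grid[of 0] ab by simp
  next
    case False
    then have "0 \<le> h" using \<mu>[of 1] by auto
    have "sum \<mu> {1..b} - sum \<mu> {1..a} = sum \<mu> {a<..b}"
      using ab by (subst sum_diff[symmetric]) (auto intro: sum.cong)
    also have "\<dots> \<le> real (card {a<..b}) * h"
      using ab by (intro sum_bounded_above) (auto simp: \<mu>)
    also have "\<dots> \<le> real s * h"
      using ab \<open>0 \<le> h\<close> by (intro mult_right_mono) auto
    finally show ?thesis using sh by linarith
  qed
  moreover have "\<bar>sum z {1..a} - sum \<mu> {1..a}\<bar> < \<epsilon> / 2" "\<bar>sum z {1..b} - sum \<mu> {1..b}\<bar> < \<epsilon> / 2"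
    unfolding a_def b_def using grid[of j] grid[of "j + 1"] ab(5) by simp_all
  moreover have "sum z {1..a} \<le> sum z {1..k}" "sum z {1..k} \<le> sum z {1..b}"
    "sum \<mu> {1..a} \<le> sum \<mu> {1..k}" "sum \<mu> {1..k} \<le> sum \<mu> {1..b}"
    using mono[of a k z] mono[of k b z] mono[of a k \<mu>] mono[of k b \<mu>] ab z \<mu> by auto
  ultimately show ?thesis by linarith
qed

lemma (in prob_space) prob_max_partial_sum_deviation_le:
  fixes Z :: "nat \<Rightarrow> 'a \<Rightarrow> real" and K J s :: nat and h \<epsilon> :: real
  assumes ind: "indep_vars (\<lambda>_. borel) Z {1..K}"
    and sq: "\<And>i. i \<in> {1..K} \<Longrightarrow> integrable M (\<lambda>\<omega>. (Z i \<omega>)\<^sup>2)"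
    and nonneg: "\<And>i. i \<in> {1..K} \<Longrightarrow> AE \<omega> in M. 0 \<le> Z i \<omega>"
    and mean: "\<And>i. i \<in> {1..K} \<Longrightarrow> expectation (Z i) \<le> h"
    and s: "s \<ge> 1" "K \<le> J * s" and sh: "real s * h \<le> \<epsilon> / 2" and \<epsilon>: "\<epsilon> > 0"
  shows "prob {\<omega> \<in> space M. \<exists>k\<le>K. \<epsilon> < \<bar>(\<Sum>i=1..k. Z i \<omega>) - (\<Sum>i=1..k. expectation (Z i))\<bar>}
      \<le> real (J + 2) * (\<Sum>i=1..K. variance (Z i)) / (\<epsilon> / 2)\<^sup>2"
proof -
  have meas[measurable]: "\<And>i. i \<in> {1..K} \<Longrightarrow> Z i \<in> borel_measurable M"
    using ind by (auto simp: indep_vars_def)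
  define g where "g j = min (j * s) K" for j
  define B where "B j = {\<omega> \<in> space M.
      \<epsilon> / 2 \<le> \<bar>(\<Sum>i=1..g j. Z i \<omega>) - (\<Sum>i=1..g j. expectation (Z i))\<bar>}" for j
  have sub: "{1..g j} \<subseteq> {1..K}" for j unfolding g_def by auto
  have Bm: "B j \<in> sets M" for j
  proof -
    have "(\<lambda>\<omega>. \<Sum>i=1..g j. Z i \<omega>) \<in> borel_measurable M"
      using sub[of j] by (intro borel_measurable_sum meas) auto
    then show ?thesis unfolding B_def by measurable
  qed
  have PB: "prob (B j) \<le> (\<Sum>i=1..K. variance (Z i)) / (\<epsilon> / 2)\<^sup>2" for j
  proof -
    have "prob (B j) \<le> (\<Sum>i=1..g j. variance (Z i)) / (\<epsilon> / 2)\<^sup>2"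
      unfolding B_def using sq sub[of j] \<epsilon>
      by (intro Chebyshev_inequality_sum_indep indep_vars_subset[OF ind]) auto
    also have "\<dots> \<le> (\<Sum>i=1..K. variance (Z i)) / (\<epsilon> / 2)\<^sup>2"
      using sub[of j] by (intro divide_right_mono sum_mono2) (auto simp: variance_positive)
    finally show ?thesis .
  qed
  have "AE \<omega> in M. \<forall>i\<in>{1..K}. 0 \<le> Z i \<omega>"
    using nonneg by (intro AE_finite_allI) auto
  then have "AE \<omega> in M. \<omega> \<in> {\<omega> \<in> space M.
      \<exists>k\<le>K. \<epsilon> < \<bar>(\<Sum>i=1..k. Z i \<omega>) - (\<Sum>i=1..k. expectation (Z i))\<bar>} \<longrightarrow> \<omega> \<in> (\<Union>j\<in>{..J+1}. B j)"
  proof eventually_elim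
    case (elim \<omega>)
    show ?case
    proof (rule impI, rule ccontr)
      assume "\<omega> \<in> {\<omega> \<in> space M.
          \<exists>k\<le>K. \<epsilon> < \<bar>(\<Sum>i=1..k. Z i \<omega>) - (\<Sum>i=1..k. expectation (Z i))\<bar>}"
        and outside: "\<omega> \<notin> (\<Union>j\<in>{..J+1}. B j)"
      then obtain k where k: "k \<le> K" "\<epsilon> < \<bar>(\<Sum>i=1..k. Z i \<omega>) - (\<Sum>i=1..k. expectation (Z i))\<bar>"
        and "\<omega> \<in> space M" by blast
      have "\<bar>(\<Sum>i=1..k. Z i \<omega>) - (\<Sum>i=1..k. expectation (Z i))\<bar> \<le> \<epsilon>"
      proof (rule partial_sum_deviation_le_grid[OF _ _ s _ sh k(1)])
        show "0 \<le> expectation (Z i) \<and> expectation (Z i) \<le> h" if "i \<in> {1..K}" for i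
          using integral_nonneg_AE[OF nonneg[OF that]] mean[OF that] by simp
        show "\<bar>(\<Sum>i=1..min (j * s) K. Z i \<omega>) - (\<Sum>i=1..min (j * s) K. expectation (Z i))\<bar> < \<epsilon> / 2"
          if "j \<le> J + 1" for j
          using outside that \<open>\<omega> \<in> space M\<close> unfolding B_def g_def by force
      qed (use elim in auto)
      then show False using k(2) by simp
    qed
  qed
  then have "prob {\<omega> \<in> space M. \<exists>k\<le>K. \<epsilon> < \<bar>(\<Sum>i=1..k. Z i \<omega>) - (\<Sum>i=1..k. expectation (Z i))\<bar>}
      \<le> prob (\<Union>j\<in>{..J+1}. B j)"
    by (rule finite_measure_mono_AE) (use Bm in auto)
  also have "\<dots> \<le> (\<Sum>j\<in>{..J+1}. prob (B j))"
    by (rule measure_UNION_le) (use Bm in auto)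
  also have "\<dots> \<le> (\<Sum>j\<in>{..J+1}. (\<Sum>i=1..K. variance (Z i)) / (\<epsilon> / 2)\<^sup>2)"
    by (intro sum_mono PB)
  finally show ?thesis by simp
qed

lemma grid_step_mass_le:
  fixes h C \<epsilon> :: real and K J :: nat
  assumes J: "J \<ge> 1" "max C 1 / real J \<le> \<epsilon> / 4"
    and "real K * h \<le> C" "h < \<epsilon> / 4" "\<epsilon> > 0"
  shows "real (K div J + 1) * h \<le> \<epsilon> / 2"
proof (cases "h \<ge> 0")
  case True
  have "real (K div J) * h \<le> real K / real J * h"
    using True by (intro mult_right_mono) (simp_all add: of_nat_div_le_of_nat)
  also have "\<dots> \<le> max C 1 / real J"
    using assms J(1) by (simp add: divide_right_mono)
  finally have "real (K div J) * h \<le> \<epsilon> / 4" using J(2) by linarith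
  moreover have "real (K div J + 1) * h = real (K div J) * h + h" by (simp add: algebra_simps)
  ultimately show ?thesis using assms by linarith
next
  case False
  then have "real (K div J + 1) * h \<le> 0" by (simp add: mult_nonneg_nonpos)
  then show ?thesis using assms by linarith
qed

lemma (in prob_space) max_partial_sum_deviation_tendsto_zero:
  fixes Z :: "nat \<Rightarrow> nat \<Rightarrow> 'a \<Rightarrow> real" and \<mu> :: "nat \<Rightarrow> nat \<Rightarrow> real"
    and K :: "nat \<Rightarrow> nat" and h v :: "nat \<Rightarrow> real"
  assumes ind: "\<And>n. indep_vars (\<lambda>_. borel) (Z n) {1..K n}"
    and moments: "\<forall>\<^sub>F n in sequentially. \<forall>i\<in>{1..K n}. integrable M (\<lambda>\<omega>. (Z n i \<omega>)\<^sup>2) \<and>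
        (AE \<omega> in M. 0 \<le> Z n i \<omega>) \<and> expectation (Z n i) = \<mu> n i \<and> \<mu> n i \<le> h n \<and>
        variance (Z n i) \<le> v n"
    and h: "h \<longlonglongrightarrow> 0" and Kh: "\<And>n. real (K n) * h n \<le> C"
    and Kv: "(\<lambda>n. real (K n) * v n) \<longlonglongrightarrow> 0" and \<epsilon>: "\<epsilon> > 0"
  shows "(\<lambda>n. prob {\<omega> \<in> space M.
      \<exists>k\<le>K n. \<epsilon> < \<bar>(\<Sum>i=1..k. Z n i \<omega>) - (\<Sum>i=1..k. \<mu> n i)\<bar>}) \<longlonglongrightarrow> 0"
proof -
  define J :: nat where "J = nat \<lceil>4 * max C 1 / \<epsilon>\<rceil> + 1"
  have J: "J \<ge> 1" "max C 1 / real J \<le> \<epsilon> / 4"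
  proof -
    show "J \<ge> 1" unfolding J_def by simp
    have "4 * max C 1 / \<epsilon> \<le> real J" unfolding J_def by linarith
    then have "4 * max C 1 \<le> real J * \<epsilon>" using \<epsilon> by (simp add: divide_le_eq)
    then show "max C 1 / real J \<le> \<epsilon> / 4"
      using \<open>J \<ge> 1\<close> by (simp add: divide_le_eq field_simps)
  qed
  define bound where "bound n = real (J + 2) * (real (K n) * v n) / (\<epsilon> / 2)\<^sup>2" for n
  have "bound \<longlonglongrightarrow> real (J + 2) * 0 / (\<epsilon> / 2)\<^sup>2"
    unfolding bound_def using \<epsilon> by (intro tendsto_intros Kv) auto
  then have bound: "bound \<longlonglongrightarrow> 0" by simp
  have "\<forall>\<^sub>F n in sequentially. h n < \<epsilon> / 4"
    using order_tendstoD(2)[OF h, of "\<epsilon> / 4"] \<epsilon> by simp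
  with moments have "\<forall>\<^sub>F n in sequentially. prob {\<omega> \<in> space M.
      \<exists>k\<le>K n. \<epsilon> < \<bar>(\<Sum>i=1..k. Z n i \<omega>) - (\<Sum>i=1..k. \<mu> n i)\<bar>} \<le> bound n"
  proof eventually_elim
    case (elim n)
    define s where "s = K n div J + 1"
    have "K n = J * (K n div J) + K n mod J" "K n mod J < J" "J * s = J * (K n div J) + J"
      using J(1) unfolding s_def by simp_all
    then have "K n \<le> J * s" by linarith
    moreover have "real s * h n \<le> \<epsilon> / 2"
      unfolding s_def using J Kh elim \<epsilon> by (intro grid_step_mass_le) auto
    moreover have "s \<ge> 1" by (simp add: s_def)
    ultimately have "prob {\<omega> \<in> space M.
        \<exists>k\<le>K n. \<epsilon> < \<bar>(\<Sum>i=1..k. Z n i \<omega>) - (\<Sum>i=1..k. expectation (Z n i))\<bar>}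
      \<le> real (J + 2) * (\<Sum>i=1..K n. variance (Z n i)) / (\<epsilon> / 2)\<^sup>2"
      using elim \<epsilon> by (intro prob_max_partial_sum_deviation_le[OF ind, where s=s and J=J and h="h n"]) auto
    moreover have "(\<Sum>i=1..k. \<mu> n i) = (\<Sum>i=1..k. expectation (Z n i))" if "k \<le> K n" for k
      using elim that by (intro sum.cong) auto
    then have "{\<omega> \<in> space M. \<exists>k\<le>K n. \<epsilon> < \<bar>(\<Sum>i=1..k. Z n i \<omega>) - (\<Sum>i=1..k. \<mu> n i)\<bar>}
      = {\<omega> \<in> space M. \<exists>k\<le>K n. \<epsilon> < \<bar>(\<Sum>i=1..k. Z n i \<omega>) - (\<Sum>i=1..k. expectation (Z n i))\<bar>}"
      by (intro Collect_cong) auto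
    ultimately have "prob {\<omega> \<in> space M.
        \<exists>k\<le>K n. \<epsilon> < \<bar>(\<Sum>i=1..k. Z n i \<omega>) - (\<Sum>i=1..k. \<mu> n i)\<bar>}
      \<le> real (J + 2) * (\<Sum>i=1..K n. variance (Z n i)) / (\<epsilon> / 2)\<^sup>2"
      by simp
    also have "\<dots> \<le> bound n"
    proof -
      have "variance (Z n i) \<le> v n" if "i \<in> {1..K n}" for i using elim that by blast
      then have "(\<Sum>i=1..K n. variance (Z n i)) \<le> (\<Sum>i=1..K n. v n)" by (rule sum_mono)
      then show ?thesis unfolding bound_def by (intro divide_right_mono mult_left_mono) auto
    qed
    finally show ?case .
  qed
  then show ?thesis
    by (intro tendsto_sandwich[OF _ _ tendsto_const bound]) auto
qed

section \<open>Riemann sums on the dyadic grid\<close>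

lemma continuous_antiderivative_interval_integral:
  fixes f :: "real \<Rightarrow> real"
  assumes f: "continuous_on UNIV f"
  obtains G where "\<And>x. (G has_real_derivative f x) (at x)"
    and "\<And>x. (LBINT r=0..x. f r) = G x - G 0"
proof -
  have "\<exists>G. \<forall>x :: real. -\<infinity> < ereal x \<longrightarrow> ereal x < \<infinity> \<longrightarrow> (G has_vector_derivative f x) (at x)"
    by (rule einterval_antiderivative) (use f in \<open>auto intro: continuous_on_interior\<close>)
  then obtain G where G: "\<And>x. (G has_vector_derivative f x) (at x)" by auto
  have FTC: "(LBINT r=(ereal 0)..ereal x. f r) = G x - G 0" for x
    by (rule interval_integral_FTC_finite)
      (auto intro: continuous_on_subset[OF f] has_vector_derivative_at_within G)
  show ?thesis
  proof (rule that)
    show "(G has_real_derivative f x) (at x)" for x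
      using G by (simp add: has_real_derivative_iff_has_vector_derivative)
    show "(LBINT r=0..x. f r) = G x - G 0" for x
      using FTC by (simp add: zero_ereal_def)
  qed
qed

lemma dyadic_step_mvt:
  fixes G g :: "real \<Rightarrow> real" and s :: real and i n :: nat
  assumes G: "\<And>x. (G has_real_derivative g x) (at x)" and s: "s \<in> {1, -1}" and i: "i \<ge> 1"
  obtains \<xi> where "\<bar>\<xi> - s * real i / 2^n\<bar> \<le> 1 / 2^n" "\<bar>\<xi>\<bar> \<le> real i / 2^n"
    "s * (G (s * real i / 2^n) - G (s * (real i - 1) / 2^n)) = g \<xi> / 2^n"
proof -
  have step: "real i / 2^n - (real i - 1) / 2^n = 1 / 2^n" by (simp add: diff_divide_distrib)
  have "(real i - 1) / 2^n < real i / 2^n" by (simp add: divide_strict_right_mono)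
  from MVT2[OF this G] obtain z where z: "(real i - 1) / 2^n < z" "z < real i / 2^n"
    "G (real i / 2^n) - G ((real i - 1) / 2^n) = (real i / 2^n - (real i - 1) / 2^n) * g z"
    by blast
  have "- real i / 2^n < - (real i - 1) / 2^n" by (intro divide_strict_right_mono) auto
  from MVT2[OF this G] obtain w where w: "- real i / 2^n < w" "w < - (real i - 1) / 2^n"
    "G (- (real i - 1) / 2^n) - G (- real i / 2^n) = (- (real i - 1) / 2^n - - real i / 2^n) * g w"
    by blast
  have "0 \<le> (real i - 1) / 2^n" using i by simp
  then show ?thesis
    using s that[of z] that[of w] z w step by (auto simp: abs_le_iff diff_divide_distrib)
qed

lemma le_nat_floor_imp_real_le: "0 \<le> x \<Longrightarrow> k \<le> nat \<lfloor>x\<rfloor> \<Longrightarrow> real k \<le> x"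
  by (meson of_nat_floor of_nat_le_iff order_trans)

lemma dyadic_riemann_sum_error:
  fixes G g :: "real \<Rightarrow> real" and \<mu> :: "nat \<Rightarrow> real \<Rightarrow> nat \<Rightarrow> real" and A \<epsilon> :: real
  assumes G: "\<And>x. (G has_real_derivative g x) (at x)" and g: "continuous_on {-A..A} g"
    and approx: "\<And>\<eta>. \<eta> > 0 \<Longrightarrow> \<forall>\<^sub>F n in sequentially. \<forall>s\<in>{1,-1}. \<forall>i\<in>{1..nat \<lfloor>2^n * A\<rfloor>}.
        \<bar>2^n * \<mu> n s i - g (s * real i / 2^n)\<bar> \<le> \<eta>"
    and A: "A > 0" and \<epsilon>: "\<epsilon> > 0"
  shows "\<forall>\<^sub>F n in sequentially. \<forall>s\<in>{1,-1}. \<forall>k\<le>nat \<lfloor>2^n * A\<rfloor>.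
      (\<Sum>i=1..k. \<bar>\<mu> n s i - s * (G (s * real i / 2^n) - G (s * (real i - 1) / 2^n))\<bar>) \<le> \<epsilon>"
proof -
  define \<eta> where "\<eta> = \<epsilon> / (2 * A)"
  have \<eta>: "\<eta> > 0" unfolding \<eta>_def using A \<epsilon> by simp
  obtain \<delta> where \<delta>: "\<delta> > 0"
    and g_close: "\<And>x y. x \<in> {-A..A} \<Longrightarrow> y \<in> {-A..A} \<Longrightarrow> \<bar>y - x\<bar> < \<delta> \<Longrightarrow> \<bar>g y - g x\<bar> < \<eta>"
    using uniformly_continuous_onE[OF compact_uniformly_continuous[OF g compact_Icc] \<eta>]
    by (auto simp: dist_real_def)
  have "\<forall>\<^sub>F n in sequentially. 1 / (2::real)^n < \<delta>"
    using order_tendstoD(2)[OF LIMSEQ_inverse_realpow_zero \<delta>] by (simp add: divide_inverse)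
  with approx[OF \<eta>] show ?thesis
  proof eventually_elim
    case (elim n)
    show ?case
    proof (intro ballI allI impI)
      fix s :: real and k assume s: "s \<in> {1,-1}" and k: "k \<le> nat \<lfloor>2^n * A\<rfloor>"
      have summand_le: "\<bar>\<mu> n s i - s * (G (s * real i / 2^n) - G (s * (real i - 1) / 2^n))\<bar> \<le> 2 * \<eta> / 2^n"
        if i: "i \<in> {1..k}" for i
      proof -
        obtain \<xi> where \<xi>: "\<bar>\<xi> - s * real i / 2^n\<bar> \<le> 1 / 2^n" "\<bar>\<xi>\<bar> \<le> real i / 2^n"
          and mvt: "s * (G (s * real i / 2^n) - G (s * (real i - 1) / 2^n)) = g \<xi> / 2^n"
          using dyadic_step_mvt[OF G s, of i n] i by auto
        have "real i \<le> 2^n * A"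
          using i k A by (intro le_nat_floor_imp_real_le) auto
        then have "real i / 2^n \<le> A" by (simp add: divide_le_eq mult.commute)
        then have "\<xi> \<in> {-A..A}" "s * real i / 2^n \<in> {-A..A}" using \<xi>(2) s by auto
        then have "\<bar>g \<xi> - g (s * real i / 2^n)\<bar> < \<eta>" using g_close \<xi>(1) elim by force
        moreover have "\<bar>2^n * \<mu> n s i - g (s * real i / 2^n)\<bar> \<le> \<eta>" using elim s i k by auto
        ultimately have "\<bar>2^n * \<mu> n s i - g \<xi>\<bar> \<le> 2 * \<eta>" by linarith
        then show ?thesis unfolding mvt by (simp add: field_simps abs_divide)
      qed
      have "(\<Sum>i=1..k. \<bar>\<mu> n s i - s * (G (s * real i / 2^n) - G (s * (real i - 1) / 2^n))\<bar>)
          \<le> (\<Sum>i=1..k. 2 * \<eta> / 2^n)"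
        by (rule sum_mono) (rule summand_le)
      also have "\<dots> = real k * (2 * \<eta> / 2^n)" by simp
      also have "\<dots> \<le> (2^n * A) * (2 * \<eta> / 2^n)"
        using k A \<eta> by (intro mult_right_mono le_nat_floor_imp_real_le) auto
      also have "\<dots> = \<epsilon>" unfolding \<eta>_def using A by simp
      finally show "(\<Sum>i=1..k. \<bar>\<mu> n s i - s * (G (s * real i / 2^n) - G (s * (real i - 1) / 2^n))\<bar>) \<le> \<epsilon>" .
    qed
  qed
qed

lemma abs_inverse_shift_diff_le:
  fixes P R m \<delta> :: real
  assumes "m > 0" "P \<ge> m" "R \<ge> m" "0 \<le> \<delta>" "\<delta> \<le> m / 2"
  shows "\<bar>1 / (P - \<delta>) - 1 / R\<bar> \<le> 2 * (\<bar>R - P\<bar> + \<delta>) / m\<^sup>2"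
proof -
  have pos: "P - \<delta> \<ge> m / 2" "R > 0" using assms by auto
  have "1 / (P - \<delta>) - 1 / R = (R - P + \<delta>) / ((P - \<delta>) * R)"
    using pos assms by (simp add: field_simps)
  then have "\<bar>1 / (P - \<delta>) - 1 / R\<bar> = \<bar>R - P + \<delta>\<bar> / ((P - \<delta>) * R)"
    using pos assms by (simp add: abs_divide abs_mult)
  also have "\<dots> \<le> (\<bar>R - P\<bar> + \<delta>) / (m / 2 * m)"
    using pos assms by (intro frac_le mult_mono) (auto simp: abs_triangle_ineq[THEN order_trans])
  also have "\<dots> = 2 * (\<bar>R - P\<bar> + \<delta>) / m\<^sup>2" by (simp add: power2_eq_square)
  finally show ?thesis .
qed

lemma dyadic_scaled_abs: "x \<in> dyadic n \<Longrightarrow> real (nat \<lfloor>2^n * \<bar>x\<bar>\<rfloor>) = 2^n * \<bar>x\<bar>"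
  by (auto simp: dyadic_def abs_divide simp flip: of_int_abs)

lemma dyadic_eq_sgn_mult:
  assumes "x \<in> dyadic n"
  shows "x = sgn x * real (nat \<lfloor>2^n * \<bar>x\<bar>\<rfloor>) / 2^n"
  unfolding dyadic_scaled_abs[OF assms] by (simp add: sgn_mult_abs)

lemma finite_dyadic_Icc: "finite ({-A..A} \<inter> dyadic n)"
proof -
  let ?c = "\<lceil>2^n * A\<rceil>"
  have "{-A..A} \<inter> dyadic n \<subseteq> (\<lambda>k. real_of_int k / 2^n) ` {-?c..?c}"
  proof
    fix x assume x: "x \<in> {-A..A} \<inter> dyadic n"
    then obtain k :: int where k: "x = k / 2^n" by (auto simp: dyadic_def)
    have "\<bar>real_of_int k\<bar> \<le> 2^n * A" using x k by (auto simp: field_simps abs_le_iff)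
    then have "k \<in> {-?c..?c}" by (simp add: abs_le_iff) linarith
    then show "x \<in> (\<lambda>k. real_of_int k / 2^n) ` {-?c..?c}" using k by (intro image_eqI)
  qed
  then show ?thesis by (rule finite_subset) auto
qed

lemma telescoping_dyadic_deviation_le:
  fixes G :: "real \<Rightarrow> real" and z \<mu> :: "nat \<Rightarrow> real"
  assumes s: "s \<in> {1, -1}"
  shows "\<bar>s * (\<Sum>i=1..k. z i) - (G (s * real k / 2^n) - G 0)\<bar>
     \<le> \<bar>(\<Sum>i=1..k. z i) - (\<Sum>i=1..k. \<mu> i)\<bar>
       + (\<Sum>i=1..k. \<bar>\<mu> i - s * (G (s * real i / 2^n) - G (s * (real i - 1) / 2^n))\<bar>)"
proof -
  define D where "D i = G (s * real i / 2^n) - G (s * (real i - 1) / 2^n)" for i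
  have telescope: "G (s * real k / 2^n) - G 0 = (\<Sum>i=1..k. D i)"
    by (induction k) (simp_all add: D_def)
  have "s * s = 1" "\<bar>s\<bar> = 1" using s by auto
  then have "s * (\<Sum>i=1..k. z i) - (G (s * real k / 2^n) - G 0)
      = s * ((\<Sum>i=1..k. z i) - (\<Sum>i=1..k. \<mu> i)) + s * (\<Sum>i=1..k. \<mu> i - s * D i)"
    unfolding telescope by (simp add: sum_subtractf sum_distrib_left algebra_simps mult.assoc[symmetric])
  also have "\<bar>\<dots>\<bar> \<le> \<bar>(\<Sum>i=1..k. z i) - (\<Sum>i=1..k. \<mu> i)\<bar> + \<bar>\<Sum>i=1..k. \<mu> i - s * D i\<bar>"
    using abs_triangle_ineq[of "s * ((\<Sum>i=1..k. z i) - (\<Sum>i=1..k. \<mu> i))" "s * (\<Sum>i=1..k. \<mu> i - s * D i)"]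
      \<open>\<bar>s\<bar> = 1\<close> by (simp add: abs_mult)
  also have "\<bar>\<Sum>i=1..k. \<mu> i - s * D i\<bar> \<le> (\<Sum>i=1..k. \<bar>\<mu> i - s * D i\<bar>)" by (rule sum_abs)
  finally show ?thesis unfolding D_def by simp
qed

lemma sup_dyadic_deviation_gt_imp_partial_sum_deviation_gt:
  fixes z :: "real \<Rightarrow> nat \<Rightarrow> real" and \<mu> :: "real \<Rightarrow> nat \<Rightarrow> real" and G :: "real \<Rightarrow> real"
  assumes A: "A \<ge> 0"
    and bias: "\<forall>s\<in>{1,-1}. \<forall>k\<le>nat \<lfloor>2^n * A\<rfloor>.
        (\<Sum>i=1..k. \<bar>\<mu> s i - s * (G (s * real i / 2^n) - G (s * (real i - 1) / 2^n))\<bar>) \<le> \<epsilon> / 2"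
    and big: "\<epsilon> < \<bar>SUP x\<in>{-A..A} \<inter> dyadic n.
        \<bar>sgn x * (\<Sum>i=1..nat \<lfloor>2^n * \<bar>x\<bar>\<rfloor>. z (sgn x) i) - (G x - G 0)\<bar>\<bar>"
  shows "\<exists>s\<in>{1,-1}. \<exists>k\<le>nat \<lfloor>2^n * A\<rfloor>. \<epsilon> / 2 < \<bar>(\<Sum>i=1..k. z s i) - (\<Sum>i=1..k. \<mu> s i)\<bar>"
proof -
  define S where "S = {-A..A} \<inter> dyadic n"
  define g where "g x = \<bar>sgn x * (\<Sum>i=1..nat \<lfloor>2^n * \<bar>x\<bar>\<rfloor>. z (sgn x) i) - (G x - G 0)\<bar>" for x
  have "finite S" unfolding S_def by (rule finite_dyadic_Icc)
  moreover have "0 \<in> S" unfolding S_def dyadic_def using A by (auto intro: exI[of _ 0])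
  ultimately have "(SUP x\<in>S. g x) = Max (g ` S)" "Max (g ` S) \<in> g ` S"
    by (auto intro!: cSup_eq_Max Max_in)
  then obtain x where "x \<in> S" "(SUP x\<in>S. g x) = g x" by auto
  moreover have "\<bar>g x\<bar> = g x" by (simp add: g_def)
  ultimately have x: "x \<in> S" "\<epsilon> < g x"
    using big unfolding S_def[symmetric] g_def[symmetric] by simp_all
  show ?thesis
  proof (cases "x = 0")
    case True
    then show ?thesis using x(2) by (intro bexI[of _ 1] exI[of _ 0]) (auto simp: g_def)
  next
    case False
    define s where "s = sgn x"
    define j where "j = nat \<lfloor>2^n * \<bar>x\<bar>\<rfloor>"
    have s: "s \<in> {1,-1}" using False by (auto simp: s_def sgn_if)
    have "x \<in> dyadic n" "\<bar>x\<bar> \<le> A" using x(1) unfolding S_def by auto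
    have xj: "x = s * real j / 2^n"
      unfolding s_def j_def using \<open>x \<in> dyadic n\<close> by (rule dyadic_eq_sgn_mult)
    have jK: "j \<le> nat \<lfloor>2^n * A\<rfloor>"
      unfolding j_def using \<open>\<bar>x\<bar> \<le> A\<close> by (intro nat_mono floor_mono) simp
    have "g x \<le> \<bar>(\<Sum>i=1..j. z s i) - (\<Sum>i=1..j. \<mu> s i)\<bar> +
        (\<Sum>i=1..j. \<bar>\<mu> s i - s * (G (s * real i / 2^n) - G (s * (real i - 1) / 2^n))\<bar>)"
      unfolding g_def s_def[symmetric] j_def[symmetric] arg_cong[OF xj, of G]
      by (rule telescoping_dyadic_deviation_le[OF s])
    moreover have "(\<Sum>i=1..j. \<bar>\<mu> s i - s * (G (s * real i / 2^n) - G (s * (real i - 1) / 2^n))\<bar>) \<le> \<epsilon> / 2"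
      using bias s jK by blast
    ultimately have "\<epsilon> / 2 < \<bar>(\<Sum>i=1..j. z s i) - (\<Sum>i=1..j. \<mu> s i)\<bar>" using x(2) by linarith
    then show ?thesis using s jK by blast
  qed
qed

lemma measurable_partial_sum_deviation_event:
  fixes Z :: "nat \<Rightarrow> 'a \<Rightarrow> real" and K :: nat
  assumes "\<And>i. i \<ge> 1 \<Longrightarrow> Z i \<in> borel_measurable M"
  shows "{\<omega> \<in> space M. \<exists>k\<le>K. \<epsilon> < \<bar>(\<Sum>i=1..k. Z i \<omega>) - c k\<bar>} \<in> sets M"
proof -
  have "(\<lambda>\<omega>. \<Sum>i=1..k. Z i \<omega>) \<in> borel_measurable M" for k
    using assms by (intro borel_measurable_sum) auto
  then have "(\<Union>k\<in>{..K}. {\<omega> \<in> space M. \<epsilon> < \<bar>(\<Sum>i=1..k. Z i \<omega>) - c k\<bar>}) \<in> sets M"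
    by (intro sets.finite_UN) auto
  also have "(\<Union>k\<in>{..K}. {\<omega> \<in> space M. \<epsilon> < \<bar>(\<Sum>i=1..k. Z i \<omega>) - c k\<bar>})
      = {\<omega> \<in> space M. \<exists>k\<le>K. \<epsilon> < \<bar>(\<Sum>i=1..k. Z i \<omega>) - c k\<bar>}"
    by auto
  finally show ?thesis .
qed

lemma (in prob_space) sup_dyadic_deviation_tendsto_in_prob_zero:
  fixes Z :: "nat \<Rightarrow> real \<Rightarrow> nat \<Rightarrow> 'a \<Rightarrow> real" and \<mu> :: "nat \<Rightarrow> real \<Rightarrow> nat \<Rightarrow> real"
    and G f :: "real \<Rightarrow> real" and A :: real
  assumes A: "A > 0"
    and meas: "\<And>n s i. s \<in> {1,-1} \<Longrightarrow> i \<ge> 1 \<Longrightarrow> Z n s i \<in> borel_measurable M"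
    and fluct: "\<And>s \<epsilon>. s \<in> {1,-1} \<Longrightarrow> \<epsilon> > 0 \<Longrightarrow> (\<lambda>n. prob {\<omega> \<in> space M.
        \<exists>k\<le>nat \<lfloor>2^n * A\<rfloor>. \<epsilon> < \<bar>(\<Sum>i=1..k. Z n s i \<omega>) - (\<Sum>i=1..k. \<mu> n s i)\<bar>}) \<longlonglongrightarrow> 0"
    and bias: "\<And>\<epsilon>. \<epsilon> > 0 \<Longrightarrow> \<forall>\<^sub>F n in sequentially. \<forall>s\<in>{1,-1}. \<forall>k\<le>nat \<lfloor>2^n * A\<rfloor>.
        (\<Sum>i=1..k. \<bar>\<mu> n s i - s * (G (s * real i / 2^n) - G (s * (real i - 1) / 2^n))\<bar>) \<le> \<epsilon>"
    and G: "\<And>x. (LBINT r=0..x. f r) = G x - G 0"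
  shows "tendsto_in_prob_zero M (\<lambda>n \<omega>. SUP x\<in>{-A..A} \<inter> dyadic n.
      \<bar>sgn x * (\<Sum>i=1..nat \<lfloor>2^n * \<bar>x\<bar>\<rfloor>. Z n (sgn x) i \<omega>) - (LBINT r=0..x. f r)\<bar>)"
  unfolding tendsto_in_prob_zero_def G
proof (intro allI impI)
  fix \<epsilon> :: real assume \<epsilon>: "\<epsilon> > 0"
  define dev where "dev n \<omega> = (SUP x\<in>{-A..A} \<inter> dyadic n.
      \<bar>sgn x * (\<Sum>i=1..nat \<lfloor>2^n * \<bar>x\<bar>\<rfloor>. Z n (sgn x) i \<omega>) - (G x - G 0)\<bar>)" for n \<omega>
  define D where "D n s = {\<omega> \<in> space M. \<exists>k\<le>nat \<lfloor>2^n * A\<rfloor>.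
      \<epsilon> / 2 < \<bar>(\<Sum>i=1..k. Z n s i \<omega>) - (\<Sum>i=1..k. \<mu> n s i)\<bar>}" for n s
  have D: "D n s \<in> sets M" if "s \<in> {1,-1}" for n s
    unfolding D_def using meas[OF that] by (rule measurable_partial_sum_deviation_event)
  have "(\<lambda>n. prob (D n 1) + prob (D n (-1))) \<longlonglongrightarrow> 0 + 0"
    unfolding D_def using \<epsilon> by (intro tendsto_add fluct) auto
  then have lim: "(\<lambda>n. prob (D n 1) + prob (D n (-1))) \<longlonglongrightarrow> 0" by simp
  have "\<forall>\<^sub>F n in sequentially. prob {\<omega> \<in> space M. \<epsilon> < \<bar>dev n \<omega>\<bar>} \<le> prob (D n 1) + prob (D n (-1))"
    using bias[OF half_gt_zero[OF \<epsilon>]]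
  proof (elim eventually_mono)
    fix n assume "\<forall>s\<in>{1,-1}. \<forall>k\<le>nat \<lfloor>2^n * A\<rfloor>.
        (\<Sum>i=1..k. \<bar>\<mu> n s i - s * (G (s * real i / 2^n) - G (s * (real i - 1) / 2^n))\<bar>) \<le> \<epsilon> / 2"
    note gt_imp = sup_dyadic_deviation_gt_imp_partial_sum_deviation_gt[OF _ this]
    have "{\<omega> \<in> space M. \<epsilon> < \<bar>dev n \<omega>\<bar>} \<subseteq> D n 1 \<union> D n (-1)"
    proof
      fix \<omega> assume "\<omega> \<in> {\<omega> \<in> space M. \<epsilon> < \<bar>dev n \<omega>\<bar>}"
      then have "\<omega> \<in> space M" and "\<exists>s\<in>{1,-1}. \<exists>k\<le>nat \<lfloor>2^n * A\<rfloor>.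
          \<epsilon> / 2 < \<bar>(\<Sum>i=1..k. Z n s i \<omega>) - (\<Sum>i=1..k. \<mu> n s i)\<bar>"
        using gt_imp[of "\<lambda>s i. Z n s i \<omega>"] A unfolding dev_def by auto
      then show "\<omega> \<in> D n 1 \<union> D n (-1)" unfolding D_def by blast
    qed
    then have "prob {\<omega> \<in> space M. \<epsilon> < \<bar>dev n \<omega>\<bar>} \<le> prob (D n 1 \<union> D n (-1))"
      by (rule finite_measure_mono) (use D in auto)
    also have "\<dots> \<le> prob (D n 1) + prob (D n (-1))"
      by (rule measure_Un_le) (use D in auto)
    finally show "prob {\<omega> \<in> space M. \<epsilon> < \<bar>dev n \<omega>\<bar>} \<le> prob (D n 1) + prob (D n (-1))" .
  qed
  from tendsto_sandwich[OF _ this tendsto_const lim]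
  have "(\<lambda>n. prob {\<omega> \<in> space M. \<epsilon> < \<bar>dev n \<omega>\<bar>}) \<longlonglongrightarrow> 0" by simp
  then show "(\<lambda>n. prob {\<omega> \<in> space M. \<epsilon> < \<bar>SUP x\<in>{-A..A} \<inter> dyadic n.
      \<bar>sgn x * (\<Sum>i=1..nat \<lfloor>2^n * \<bar>x\<bar>\<rfloor>. Z n (sgn x) i \<omega>) - (G x - G 0)\<bar>\<bar>}) \<longlonglongrightarrow> 0"
    unfolding dev_def .
qed

section \<open>The independent Gamma edge weights\<close>

lemma four_pow_eq: "(4::real) ^ n = 2 ^ n * 2 ^ n"
  by (simp flip: power_mult_distrib)

lemma (in prob_space) indep_sets_reindex:
  assumes inj: "inj_on f I" and ind: "indep_sets F (f ` I)"
  shows "indep_sets (\<lambda>i. F (f i)) I"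
  unfolding indep_sets_def
proof (intro conjI ballI allI impI)
  fix i assume "i \<in> I" then show "F (f i) \<subseteq> events" using ind by (auto simp: indep_sets_def)
next
  fix J A assume J: "J \<subseteq> I" "J \<noteq> {}" "finite J" and A: "A \<in> Pi J (\<lambda>i. F (f i))"
  define g where "g = the_inv_into J f"
  have injJ: "inj_on f J" using inj_on_subset[OF inj J(1)] .
  have gf: "\<And>j. j \<in> J \<Longrightarrow> g (f j) = j" unfolding g_def using the_inv_into_f_f[OF injJ] by blast
  have "(\<lambda>y. A (g y)) \<in> Pi (f ` J) F" using A gf by auto
  moreover have "f ` J \<subseteq> f ` I" "f ` J \<noteq> {}" "finite (f ` J)" using J by auto
  ultimately have "prob (\<Inter>y\<in>f`J. A (g y)) = (\<Prod>y\<in>f`J. prob (A (g y)))"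
    using ind unfolding indep_sets_def by blast
  moreover have "(\<Inter>y\<in>f`J. A (g y)) = (\<Inter>j\<in>J. A j)" using gf by auto
  moreover have "(\<Prod>y\<in>f`J. prob (A (g y))) = (\<Prod>j\<in>J. prob (A j))"
    by (simp add: prod.reindex[OF injJ] gf)
  ultimately show "prob (\<Inter>j\<in>J. A j) = (\<Prod>j\<in>J. prob (A j))" by simp
qed

lemma (in prob_space) indep_vars_reindex:
  assumes inj: "inj_on f I" and ind: "indep_vars M' X (f ` I)"
  shows "indep_vars (\<lambda>i. M' (f i)) (\<lambda>i. X (f i)) I"
  using ind indep_sets_reindex[OF inj, of "\<lambda>j. sigma_sets (space M) {X j -` A \<inter> space M |A. A \<in> sets (M' j)}"]
  unfolding indep_vars_def by auto

lemma signed_dyadic_edge_eq: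
  assumes s: "s \<in> {1, -1}"
  obtains x where "x \<in> dyadic n"
    "(x - 1/2^n = s * (real i - 1) / 2^n \<and> x = s * real i / 2^n) \<or>
     (x - 1/2^n = s * real i / 2^n \<and> x = s * (real i - 1) / 2^n)"
proof (cases "s = 1")
  case True
  have "real i / 2^n \<in> dyadic n" unfolding dyadic_def by (auto intro!: exI[of _ "int i"])
  then show ?thesis using True that by (simp add: diff_divide_distrib)
next
  case False
  then have "s = -1" using s by auto
  have "- (real i - 1) / 2^n \<in> dyadic n" unfolding dyadic_def by (auto intro!: exI[of _ "1 - int i"])
  then show ?thesis using \<open>s = -1\<close> that by (simp add: diff_divide_distrib)
qed

lemma signed_dyadic_edge_inj:
  assumes "s \<in> {1, -1}"
  shows "inj_on (\<lambda>i::nat. {s * (real i - 1) / 2^n, s * real i / 2^n}) I"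
proof (rule inj_onI)
  fix i j :: nat
  assume "{s * (real i - 1) / 2^n, s * real i / 2^n} = {s * (real j - 1) / 2^n, s * real j / 2^n}"
  moreover have "s \<noteq> 0" using assms by auto
  ultimately have "(real i - 1 = real j - 1 \<and> real i = real j) \<or> (real i - 1 = real j \<and> real i = real j - 1)"
    by (auto simp: doubleton_eq_iff)
  then show "i = j" by auto
qed

locale dyadic_gamma_edges = prob_space M for M :: "'a measure" +
  fixes L0 :: "real \<Rightarrow> real" and \<gamma> :: "nat \<Rightarrow> real set \<Rightarrow> 'a \<Rightarrow> real" and A :: real
  assumes L0_cont: "continuous_on UNIV L0" and L0_pos: "\<And>x. L0 x > 0"
    and indep: "\<And>n. indep_vars (\<lambda>_. borel) (\<gamma> n) (dyadic_edges n)"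
    and distr: "\<And>n x. x \<in> dyadic n \<Longrightarrow> distributed M lborel (\<gamma> n {x - 1 / 2 ^ n, x})
         (\<lambda>t. ennreal (gamma_density (2 ^ n / 2 * L0 (x - 1 / 2 ^ n) * L0 x) t))"
    and A_pos: "A > 0"
begin

definition edge :: "nat \<Rightarrow> real \<Rightarrow> nat \<Rightarrow> real set" where
  "edge n s i = {s * (real i - 1) / 2^n, s * real i / 2^n}"

definition shape :: "nat \<Rightarrow> real \<Rightarrow> nat \<Rightarrow> real" where
  "shape n s i = 2^n / 2 * L0 (s * (real i - 1) / 2^n) * L0 (s * real i / 2^n)"

lemma shape_pos: "shape n s i > 0"
  unfolding shape_def using L0_pos by simp

lemma edge_eq_dyadic_edge:
  assumes "s \<in> {1, -1}"
  obtains x where "x \<in> dyadic n" "edge n s i = {x - 1/2^n, x}"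
    "shape n s i = 2^n / 2 * L0 (x - 1/2^n) * L0 x"
proof -
  obtain x where "x \<in> dyadic n"
    "(x - 1/2^n = s * (real i - 1) / 2^n \<and> x = s * real i / 2^n) \<or>
     (x - 1/2^n = s * real i / 2^n \<and> x = s * (real i - 1) / 2^n)"
    using signed_dyadic_edge_eq[OF assms] by blast
  then show ?thesis using that[of x] unfolding edge_def shape_def by (auto simp: insert_commute mult_ac)
qed

lemma edge_distributed:
  assumes "s \<in> {1, -1}"
  shows "distributed M lborel (\<gamma> n (edge n s i)) (\<lambda>t. ennreal (gamma_density (shape n s i) t))"
proof -
  obtain x where x: "x \<in> dyadic n" "edge n s i = {x - 1/2^n, x}"
    "shape n s i = 2^n / 2 * L0 (x - 1/2^n) * L0 x"
    using edge_eq_dyadic_edge[OF assms] by blast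
  show ?thesis unfolding x(2,3) by (rule distr[OF x(1)])
qed

lemma indep_edges:
  assumes s: "s \<in> {1, -1}"
  shows "indep_vars (\<lambda>_. borel) (\<lambda>i. \<gamma> n (edge n s i)) I"
proof -
  have "edge n s i \<in> dyadic_edges n" for i
    using edge_eq_dyadic_edge[OF s, of n i] unfolding dyadic_edges_def by blast
  then have "indep_vars (\<lambda>_. borel) (\<gamma> n) (edge n s ` I)"
    by (intro indep_vars_subset[OF indep]) auto
  moreover have "inj_on (edge n s) I"
    using signed_dyadic_edge_inj[OF s] unfolding edge_def[abs_def] by simp
  ultimately show ?thesis using indep_vars_reindex[of "edge n s" I] by simp
qed

lemma edge_measurable: "s \<in> {1, -1} \<Longrightarrow> \<gamma> n (edge n s i) \<in> borel_measurable M"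
  using indep_edges[of s n "{i}"] by (auto simp: indep_vars_def)

lemma edge_endpoints_in_Icc:
  assumes s: "s \<in> {1, -1}" and i: "i \<in> {1..nat \<lfloor>2^n * A\<rfloor>}"
  shows "s * (real i - 1) / 2^n \<in> {-A..A}" "s * real i / 2^n \<in> {-A..A}"
proof -
  have "real i \<le> 2^n * A" using i A_pos by (intro le_nat_floor_imp_real_le) auto
  then have "real i / 2^n \<le> A" by (simp add: divide_le_eq mult.commute)
  moreover have "0 \<le> (real i - 1) / 2^n" "(real i - 1) / 2^n \<le> real i / 2^n"
    using i by (simp_all add: divide_right_mono)
  ultimately have "\<bar>s * (real i - 1) / 2^n\<bar> \<le> A" "\<bar>s * real i / 2^n\<bar> \<le> A"
    using s by (auto simp: abs_mult)
  then show "s * (real i - 1) / 2^n \<in> {-A..A}" "s * real i / 2^n \<in> {-A..A}"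
    by (simp_all only: atLeastAtMost_iff abs_le_iff) auto
qed

lemma L0_bounds_Icc:
  obtains m B where "0 < m" "\<And>x. x \<in> {-A..A} \<Longrightarrow> m \<le> L0 x \<and> L0 x \<le> B"
proof -
  have "{-A..A} \<noteq> {}" using A_pos by simp
  moreover have "continuous_on {-A..A} L0" using L0_cont by (rule continuous_on_subset) simp
  ultimately obtain x1 x2 where "x1 \<in> {-A..A}" "\<forall>y\<in>{-A..A}. L0 x1 \<le> L0 y"
    "\<forall>y\<in>{-A..A}. L0 y \<le> L0 x2"
    using continuous_attains_inf[OF compact_Icc] continuous_attains_sup[OF compact_Icc] by metis
  then show ?thesis using that[of "L0 x1" "L0 x2"] L0_pos by auto
qed

lemma L0_adjacent_close:
  assumes "\<eta> > 0"
  shows "\<forall>\<^sub>F n in sequentially. \<forall>s\<in>{1,-1}. \<forall>i\<in>{1..nat \<lfloor>2^n * A\<rfloor>}.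
    \<bar>L0 (s * (real i - 1) / 2^n) - L0 (s * real i / 2^n)\<bar> \<le> \<eta>"
proof -
  have "continuous_on {-A..A} L0" using L0_cont by (rule continuous_on_subset) simp
  then have uc: "uniformly_continuous_on {-A..A} L0" by (intro compact_uniformly_continuous compact_Icc)
  obtain \<delta> where \<delta>: "\<delta> > 0"
    and close: "\<And>x y. x \<in> {-A..A} \<Longrightarrow> y \<in> {-A..A} \<Longrightarrow> \<bar>y - x\<bar> < \<delta> \<Longrightarrow> \<bar>L0 y - L0 x\<bar> < \<eta>"
    using uniformly_continuous_onE[OF uc assms] by (auto simp: dist_real_def)
  have "\<forall>\<^sub>F n in sequentially. 1 / (2::real)^n < \<delta>"
    using order_tendstoD(2)[OF LIMSEQ_inverse_realpow_zero \<delta>] by (simp add: divide_inverse)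
  then show ?thesis
  proof (elim eventually_mono, intro ballI)
    fix n i :: nat and s :: real assume "1 / (2::real)^n < \<delta>" "s \<in> {1,-1}" "i \<in> {1..nat \<lfloor>2^n * A\<rfloor>}"
    moreover have "\<bar>s * real i / 2^n - s * (real i - 1) / 2^n\<bar> = 1 / 2^n"
      using \<open>s \<in> {1,-1}\<close> by (auto simp: diff_divide_distrib)
    ultimately have "\<bar>L0 (s * real i / 2^n) - L0 (s * (real i - 1) / 2^n)\<bar> < \<eta>"
      using close edge_endpoints_in_Icc by simp
    then show "\<bar>L0 (s * (real i - 1) / 2^n) - L0 (s * real i / 2^n)\<bar> \<le> \<eta>" by simp
  qed
qed

lemma edge_partial_sums_concentrate:
  fixes \<phi> :: "nat \<Rightarrow> real \<Rightarrow> real" and \<mu> :: "nat \<Rightarrow> real \<Rightarrow> nat \<Rightarrow> real" and c :: real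
  assumes \<phi>: "\<And>n. \<phi> n \<in> borel_measurable borel"
    and moments: "\<forall>\<^sub>F n in sequentially. \<forall>s\<in>{1,-1}. \<forall>i\<in>{1..nat \<lfloor>2^n * A\<rfloor>}.
        integrable M (\<lambda>\<omega>. (\<phi> n (\<gamma> n (edge n s i) \<omega>))\<^sup>2) \<and> (AE \<omega> in M. 0 \<le> \<phi> n (\<gamma> n (edge n s i) \<omega>)) \<and>
        expectation (\<lambda>\<omega>. \<phi> n (\<gamma> n (edge n s i) \<omega>)) = \<mu> n s i \<and> \<mu> n s i \<le> c / 2^n \<and>
        variance (\<lambda>\<omega>. \<phi> n (\<gamma> n (edge n s i) \<omega>)) \<le> c / 4^n"
    and s: "s \<in> {1,-1}" and \<epsilon>: "\<epsilon> > 0"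
  shows "(\<lambda>n. prob {\<omega> \<in> space M. \<exists>k\<le>nat \<lfloor>2^n * A\<rfloor>.
      \<epsilon> < \<bar>(\<Sum>i=1..k. \<phi> n (\<gamma> n (edge n s i) \<omega>)) - (\<Sum>i=1..k. \<mu> n s i)\<bar>}) \<longlonglongrightarrow> 0"
proof (rule max_partial_sum_deviation_tendsto_zero[where h="\<lambda>n. c / 2^n" and C="A * \<bar>c\<bar>"])
  have K: "real (nat \<lfloor>2^n * A\<rfloor>) \<le> 2^n * A" for n :: nat
    using A_pos by (intro le_nat_floor_imp_real_le) auto
  show "indep_vars (\<lambda>_. borel) (\<lambda>i \<omega>. \<phi> n (\<gamma> n (edge n s i) \<omega>)) {1..nat \<lfloor>2^n * A\<rfloor>}" for n
    using indep_vars_compose2[OF indep_edges[OF s], where Y="\<lambda>_. \<phi> n" and N="\<lambda>_. borel"] \<phi> by simp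
  show "\<forall>\<^sub>F n in sequentially. \<forall>i\<in>{1..nat \<lfloor>2^n * A\<rfloor>}.
      integrable M (\<lambda>\<omega>. (\<phi> n (\<gamma> n (edge n s i) \<omega>))\<^sup>2) \<and> (AE \<omega> in M. 0 \<le> \<phi> n (\<gamma> n (edge n s i) \<omega>)) \<and>
      expectation (\<lambda>\<omega>. \<phi> n (\<gamma> n (edge n s i) \<omega>)) = \<mu> n s i \<and> \<mu> n s i \<le> c / 2^n \<and>
      variance (\<lambda>\<omega>. \<phi> n (\<gamma> n (edge n s i) \<omega>)) \<le> c / 4^n"
    using moments s by (elim eventually_mono) blast
  show "(\<lambda>n. c / 2^n) \<longlonglongrightarrow> 0" by (rule LIMSEQ_divide_realpow_zero) simp
  show "real (nat \<lfloor>2^n * A\<rfloor>) * (c / 2^n) \<le> A * \<bar>c\<bar>" for n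
  proof -
    have "real (nat \<lfloor>2^n * A\<rfloor>) * (c / 2^n) \<le> real (nat \<lfloor>2^n * A\<rfloor>) * (\<bar>c\<bar> / 2^n)"
      by (intro mult_left_mono divide_right_mono) auto
    also have "\<dots> \<le> (2^n * A) * (\<bar>c\<bar> / 2^n)" using K[of n] by (intro mult_right_mono) auto
    finally show ?thesis by simp
  qed
  show "(\<lambda>n. real (nat \<lfloor>2^n * A\<rfloor>) * (c / 4^n)) \<longlonglongrightarrow> 0"
  proof (rule Lim_null_comparison[OF _ LIMSEQ_divide_realpow_zero[of 2 "A * \<bar>c\<bar>"]])
    have "norm (real (nat \<lfloor>2^n * A\<rfloor>) * (c / 4^n)) \<le> A * \<bar>c\<bar> / 2^n" for n :: nat
    proof -
      have "norm (real (nat \<lfloor>2^n * A\<rfloor>) * (c / 4^n)) = real (nat \<lfloor>2^n * A\<rfloor>) * (\<bar>c\<bar> / 4^n)"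
        by (simp add: abs_mult)
      also have "\<dots> \<le> (2^n * A) * (\<bar>c\<bar> / 4^n)" using K[of n] by (intro mult_right_mono) auto
      also have "\<dots> = A * \<bar>c\<bar> / 2^n" by (simp add: four_pow_eq)
      finally show ?thesis .
    qed
    then show "\<forall>\<^sub>F n in sequentially. norm (real (nat \<lfloor>2^n * A\<rfloor>) * (c / 4^n)) \<le> A * \<bar>c\<bar> / 2^n"
      by simp
  qed simp
qed (use \<epsilon> in simp)

lemma shape_bounds:
  assumes s: "s \<in> {1, -1}" and i: "i \<in> {1..nat \<lfloor>2^n * A\<rfloor>}"
    and mB: "\<And>x. x \<in> {-A..A} \<Longrightarrow> m \<le> L0 x \<and> L0 x \<le> B" and m: "0 < m"
  shows "2^n / 2 * m\<^sup>2 \<le> shape n s i" "shape n s i \<le> 2^n / 2 * B\<^sup>2"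
proof -
  let ?p = "L0 (s * (real i - 1) / 2^n)" and ?q = "L0 (s * real i / 2^n)"
  have "m \<le> ?p" "?p \<le> B" "m \<le> ?q" "?q \<le> B" using mB edge_endpoints_in_Icc[OF s i] by auto
  then have "m * m \<le> ?p * ?q" "?p * ?q \<le> B * B" using m by (auto intro!: mult_mono)
  then show "2^n / 2 * m\<^sup>2 \<le> shape n s i" "shape n s i \<le> 2^n / 2 * B\<^sup>2"
    unfolding shape_def power2_eq_square by (simp_all add: mult.assoc)
qed

lemma rescaled_edge_sums_tendsto_integral:
  fixes \<phi> :: "nat \<Rightarrow> real \<Rightarrow> real" and \<mu> :: "nat \<Rightarrow> real \<Rightarrow> nat \<Rightarrow> real" and g :: "real \<Rightarrow> real"
    and c :: real
  assumes \<phi>: "\<And>n. \<phi> n \<in> borel_measurable borel" and g: "continuous_on UNIV g"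
    and moments: "\<forall>\<^sub>F n in sequentially. \<forall>s\<in>{1,-1}. \<forall>i\<in>{1..nat \<lfloor>2^n * A\<rfloor>}.
        integrable M (\<lambda>\<omega>. (\<phi> n (\<gamma> n (edge n s i) \<omega>))\<^sup>2) \<and> (AE \<omega> in M. 0 \<le> \<phi> n (\<gamma> n (edge n s i) \<omega>)) \<and>
        expectation (\<lambda>\<omega>. \<phi> n (\<gamma> n (edge n s i) \<omega>)) = \<mu> n s i \<and> \<mu> n s i \<le> c / 2^n \<and>
        variance (\<lambda>\<omega>. \<phi> n (\<gamma> n (edge n s i) \<omega>)) \<le> c / 4^n"
    and approx: "\<And>\<eta>. \<eta> > 0 \<Longrightarrow> \<forall>\<^sub>F n in sequentially. \<forall>s\<in>{1,-1}. \<forall>i\<in>{1..nat \<lfloor>2^n * A\<rfloor>}.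
        \<bar>2^n * \<mu> n s i - g (s * real i / 2^n)\<bar> \<le> \<eta>"
  shows "tendsto_in_prob_zero M (\<lambda>n \<omega>. SUP x\<in>{-A..A} \<inter> dyadic n.
      \<bar>sgn x * (\<Sum>i=1..nat \<lfloor>2^n * \<bar>x\<bar>\<rfloor>. \<phi> n (\<gamma> n (edge n (sgn x) i) \<omega>)) - (LBINT r=0..x. g r)\<bar>)"
proof -
  obtain G where G': "\<And>x. (G has_real_derivative g x) (at x)"
    and G: "\<And>x. (LBINT r=0..x. g r) = G x - G 0"
    using continuous_antiderivative_interval_integral[OF g] by blast
  show ?thesis
  proof (rule sup_dyadic_deviation_tendsto_in_prob_zero[OF A_pos _ _ _ G])
    show "(\<lambda>\<omega>. \<phi> n (\<gamma> n (edge n s i) \<omega>)) \<in> borel_measurable M" if "s \<in> {1,-1}" for n s i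
      using measurable_compose[OF edge_measurable[OF that] \<phi>] .
    show "(\<lambda>n. prob {\<omega> \<in> space M. \<exists>k\<le>nat \<lfloor>2^n * A\<rfloor>.
        \<epsilon> < \<bar>(\<Sum>i=1..k. \<phi> n (\<gamma> n (edge n s i) \<omega>)) - (\<Sum>i=1..k. \<mu> n s i)\<bar>}) \<longlonglongrightarrow> 0"
      if "s \<in> {1,-1}" "\<epsilon> > 0" for s \<epsilon>
      by (rule edge_partial_sums_concentrate[OF \<phi> moments that])
    show "\<forall>\<^sub>F n in sequentially. \<forall>s\<in>{1,-1}. \<forall>k\<le>nat \<lfloor>2^n * A\<rfloor>.
        (\<Sum>i=1..k. \<bar>\<mu> n s i - s * (G (s * real i / 2^n) - G (s * (real i - 1) / 2^n))\<bar>) \<le> \<epsilon>"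
      if "\<epsilon> > 0" for \<epsilon>
      using continuous_on_subset[OF g] approx A_pos that
      by (intro dyadic_riemann_sum_error[OF G']) auto
  qed
qed

lemma gamma_edge_moments:
  obtains c where "\<forall>\<^sub>F n in sequentially. \<forall>s\<in>{1,-1}. \<forall>i\<in>{1..nat \<lfloor>2^n * A\<rfloor>}.
      integrable M (\<lambda>\<omega>. (2 / 4^n * \<gamma> n (edge n s i) \<omega>)\<^sup>2) \<and> (AE \<omega> in M. 0 \<le> 2 / 4^n * \<gamma> n (edge n s i) \<omega>) \<and>
      expectation (\<lambda>\<omega>. 2 / 4^n * \<gamma> n (edge n s i) \<omega>) = 2 / 4^n * shape n s i \<and>
      2 / 4^n * shape n s i \<le> c / 2^n \<and> variance (\<lambda>\<omega>. 2 / 4^n * \<gamma> n (edge n s i) \<omega>) \<le> c / 4^n"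
proof -
  obtain m B where m: "0 < m" and mB: "\<And>x. x \<in> {-A..A} \<Longrightarrow> m \<le> L0 x \<and> L0 x \<le> B"
    using L0_bounds_Icc by blast
  have B: "0 < B" using mB[of 0] m A_pos by simp
  define c where "c = (B\<^sup>2)\<^sup>2 + 3 * B\<^sup>2"
  have "\<forall>\<^sub>F n in sequentially. \<forall>s\<in>{1,-1}. \<forall>i\<in>{1..nat \<lfloor>2^n * A\<rfloor>}.
      integrable M (\<lambda>\<omega>. (2 / 4^n * \<gamma> n (edge n s i) \<omega>)\<^sup>2) \<and> (AE \<omega> in M. 0 \<le> 2 / 4^n * \<gamma> n (edge n s i) \<omega>) \<and>
      expectation (\<lambda>\<omega>. 2 / 4^n * \<gamma> n (edge n s i) \<omega>) = 2 / 4^n * shape n s i \<and>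
      2 / 4^n * shape n s i \<le> c / 2^n \<and> variance (\<lambda>\<omega>. 2 / 4^n * \<gamma> n (edge n s i) \<omega>) \<le> c / 4^n"
  proof (intro always_eventually allI ballI)
    fix n i :: nat and s :: real assume s: "s \<in> {1,-1}" and i: "i \<in> {1..nat \<lfloor>2^n * A\<rfloor>}"
    note D = edge_distributed[OF s, of n i]
    note mom = gamma_distributed_moments[OF D shape_pos]
    note sc = scaled_variance_le_second_moment[OF mom(1,2), of "2 / 4^n"]
    note bnd = scaled_gamma_moment_bounds[of "2^n" "shape n s i" "B\<^sup>2", OF _ shape_pos shape_bounds(2)[OF s i mB m]]
    have "2 / 4^n * shape n s i \<le> B\<^sup>2 / 2^n" using bnd(1) by (simp add: four_pow_eq)
    also have "\<dots> \<le> c / 2^n" unfolding c_def by (intro divide_right_mono) auto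
    finally have mean: "2 / 4^n * shape n s i \<le> c / 2^n" .
    have "variance (\<lambda>\<omega>. 2 / 4^n * \<gamma> n (edge n s i) \<omega>) \<le> ((B\<^sup>2)\<^sup>2 + 2 * B\<^sup>2) / 4^n"
      using sc(2) bnd(2) unfolding mom(4) by (simp add: four_pow_eq)
    also have "\<dots> \<le> c / 4^n" unfolding c_def by (intro divide_right_mono) auto
    finally have var: "variance (\<lambda>\<omega>. 2 / 4^n * \<gamma> n (edge n s i) \<omega>) \<le> c / 4^n" .
    have "AE \<omega> in M. 0 \<le> 2 / 4^n * \<gamma> n (edge n s i) \<omega>"
      using gamma_distributed_AE_pos[OF D] by eventually_elim simp
    then show "integrable M (\<lambda>\<omega>. (2 / 4^n * \<gamma> n (edge n s i) \<omega>)\<^sup>2) \<and>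
        (AE \<omega> in M. 0 \<le> 2 / 4^n * \<gamma> n (edge n s i) \<omega>) \<and>
        expectation (\<lambda>\<omega>. 2 / 4^n * \<gamma> n (edge n s i) \<omega>) = 2 / 4^n * shape n s i \<and>
        2 / 4^n * shape n s i \<le> c / 2^n \<and> variance (\<lambda>\<omega>. 2 / 4^n * \<gamma> n (edge n s i) \<omega>) \<le> c / 4^n"
      using sc(1) mom(3) mean var by simp
  qed
  then show ?thesis by (rule that)
qed

lemma gamma_edge_mean_approx:
  assumes \<eta>: "\<eta> > 0"
  shows "\<forall>\<^sub>F n in sequentially. \<forall>s\<in>{1,-1}. \<forall>i\<in>{1..nat \<lfloor>2^n * A\<rfloor>}.
      \<bar>2^n * (2 / 4^n * shape n s i) - L0 (s * real i / 2^n) ^ 2\<bar> \<le> \<eta>"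
proof -
  obtain m B where m: "0 < m" and mB: "\<And>x. x \<in> {-A..A} \<Longrightarrow> m \<le> L0 x \<and> L0 x \<le> B"
    using L0_bounds_Icc by blast
  have B: "0 < B" using mB[of 0] m A_pos by simp
  show ?thesis
    using L0_adjacent_close[OF divide_pos_pos[OF \<eta> B]]
  proof (elim eventually_mono, intro ballI)
    fix n i :: nat and s :: real
    assume close: "\<forall>s\<in>{1,-1}. \<forall>i\<in>{1..nat \<lfloor>2^n * A\<rfloor>}.
        \<bar>L0 (s * (real i - 1) / 2^n) - L0 (s * real i / 2^n)\<bar> \<le> \<eta> / B"
      and s: "s \<in> {1,-1}" and i: "i \<in> {1..nat \<lfloor>2^n * A\<rfloor>}"
    let ?p = "L0 (s * (real i - 1) / 2^n)" and ?q = "L0 (s * real i / 2^n)"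
    have "2^n * (2 / 4^n * shape n s i) - ?q ^ 2 = ?q * (?p - ?q)"
      unfolding shape_def four_pow_eq by (simp add: field_simps power2_eq_square)
    also have "\<bar>\<dots>\<bar> \<le> B * (\<eta> / B)"
    proof -
      have "?q \<le> B" using mB edge_endpoints_in_Icc(2)[OF s i] by blast
      moreover have "\<bar>?p - ?q\<bar> \<le> \<eta> / B" using close s i by blast
      ultimately have "?q * \<bar>?p - ?q\<bar> \<le> B * (\<eta> / B)"
        using L0_pos[of "s * real i / 2^n"] by (intro mult_mono) auto
      then show ?thesis using L0_pos[of "s * real i / 2^n"] by (simp add: abs_mult)
    qed
    finally show "\<bar>2^n * (2 / 4^n * shape n s i) - ?q ^ 2\<bar> \<le> \<eta>" using B by simp
  qed
qed

lemma gamma_edge_sums_tendsto_integral: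
  "tendsto_in_prob_zero M (\<lambda>n \<omega>. SUP x\<in>{-A..A} \<inter> dyadic n.
      \<bar>sgn x * (\<Sum>i=1..nat \<lfloor>2^n * \<bar>x\<bar>\<rfloor>. 2 / 4^n * \<gamma> n (edge n (sgn x) i) \<omega>) - (LBINT r=0..x. L0 r ^ 2)\<bar>)"
proof -
  obtain c where moments: "\<forall>\<^sub>F n in sequentially. \<forall>s\<in>{1,-1}. \<forall>i\<in>{1..nat \<lfloor>2^n * A\<rfloor>}.
      integrable M (\<lambda>\<omega>. (2 / 4^n * \<gamma> n (edge n s i) \<omega>)\<^sup>2) \<and> (AE \<omega> in M. 0 \<le> 2 / 4^n * \<gamma> n (edge n s i) \<omega>) \<and>
      expectation (\<lambda>\<omega>. 2 / 4^n * \<gamma> n (edge n s i) \<omega>) = 2 / 4^n * shape n s i \<and>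
      2 / 4^n * shape n s i \<le> c / 2^n \<and> variance (\<lambda>\<omega>. 2 / 4^n * \<gamma> n (edge n s i) \<omega>) \<le> c / 4^n"
    by (rule gamma_edge_moments)
  show ?thesis
    by (rule rescaled_edge_sums_tendsto_integral[where \<phi>="\<lambda>n t. 2 / 4^n * t", OF _ _ moments gamma_edge_mean_approx])
      (auto intro!: continuous_intros L0_cont)
qed

lemma inverse_gamma_edge_moments:
  obtains c where "\<forall>\<^sub>F n in sequentially. \<forall>s\<in>{1,-1}. \<forall>i\<in>{1..nat \<lfloor>2^n * A\<rfloor>}.
      integrable M (\<lambda>\<omega>. (1 / 2 * (1 / \<gamma> n (edge n s i) \<omega>))\<^sup>2) \<and>
      (AE \<omega> in M. 0 \<le> 1 / 2 * (1 / \<gamma> n (edge n s i) \<omega>)) \<and>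
      expectation (\<lambda>\<omega>. 1 / 2 * (1 / \<gamma> n (edge n s i) \<omega>)) = 1 / 2 * (1 / (shape n s i - 1)) \<and>
      1 / 2 * (1 / (shape n s i - 1)) \<le> c / 2^n \<and>
      variance (\<lambda>\<omega>. 1 / 2 * (1 / \<gamma> n (edge n s i) \<omega>)) \<le> c / 4^n"
proof -
  obtain m B where m: "0 < m" and mB: "\<And>x. x \<in> {-A..A} \<Longrightarrow> m \<le> L0 x \<and> L0 x \<le> B"
    using L0_bounds_Icc by blast
  define b where "b = m\<^sup>2 / 2"
  have b: "b > 0" unfolding b_def using m by simp
  define c where "c = 1 / b + (1 / b)\<^sup>2"
  have "\<forall>\<^sub>F n in sequentially. (4 / b) / (2::real)^n < 1"
    using order_tendstoD(2)[OF LIMSEQ_divide_realpow_zero[of 2 "4 / b"]] by simp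
  then have "\<forall>\<^sub>F n in sequentially. 4 \<le> (2::real)^n * b"
    by (elim eventually_mono) (use b in \<open>simp add: field_simps\<close>)
  then have "\<forall>\<^sub>F n in sequentially. \<forall>s\<in>{1,-1}. \<forall>i\<in>{1..nat \<lfloor>2^n * A\<rfloor>}.
      integrable M (\<lambda>\<omega>. (1 / 2 * (1 / \<gamma> n (edge n s i) \<omega>))\<^sup>2) \<and>
      (AE \<omega> in M. 0 \<le> 1 / 2 * (1 / \<gamma> n (edge n s i) \<omega>)) \<and>
      expectation (\<lambda>\<omega>. 1 / 2 * (1 / \<gamma> n (edge n s i) \<omega>)) = 1 / 2 * (1 / (shape n s i - 1)) \<and>
      1 / 2 * (1 / (shape n s i - 1)) \<le> c / 2^n \<and>
      variance (\<lambda>\<omega>. 1 / 2 * (1 / \<gamma> n (edge n s i) \<omega>)) \<le> c / 4^n"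
  proof (elim eventually_mono, intro ballI)
    fix n i :: nat and s :: real
    assume n: "4 \<le> (2::real)^n * b" and s: "s \<in> {1,-1}" and i: "i \<in> {1..nat \<lfloor>2^n * A\<rfloor>}"
    have a: "2^n * b \<le> shape n s i" using shape_bounds(1)[OF s i mB m] unfolding b_def by simp
    note D = edge_distributed[OF s, of n i]
    note inv = gamma_distributed_inverse_moments[OF D] and bnd = inverse_shape_moment_bounds[OF _ a b]
    have "shape n s i > 2" "shape n s i \<ge> 4" using n a by auto
    note inv = inv[OF this(1)] and bnd = bnd[OF this(2)]
    note sc = scaled_variance_le_second_moment[OF inv(1,2), of "1 / 2"]
    have mean: "1 / 2 * (1 / (shape n s i - 1)) \<le> c / 2^n"
      using bnd(1) b unfolding c_def by (smt (verit) divide_right_mono zero_le_power2 zero_le_numeral zero_le_power)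
    have var: "variance (\<lambda>\<omega>. 1 / 2 * (1 / \<gamma> n (edge n s i) \<omega>)) \<le> c / 4^n"
      using sc(2) bnd(2) b unfolding inv(4) c_def
      by (smt (verit) divide_right_mono zero_le_numeral zero_le_power divide_pos_pos)
    have E: "expectation (\<lambda>\<omega>. 1 / 2 * (1 / \<gamma> n (edge n s i) \<omega>)) = 1 / 2 * (1 / (shape n s i - 1))"
      unfolding integral_mult_right_zero inv(3) ..
    have "AE \<omega> in M. 0 \<le> 1 / 2 * (1 / \<gamma> n (edge n s i) \<omega>)"
      using gamma_distributed_AE_pos[OF D] by eventually_elim simp
    then show "integrable M (\<lambda>\<omega>. (1 / 2 * (1 / \<gamma> n (edge n s i) \<omega>))\<^sup>2) \<and>
        (AE \<omega> in M. 0 \<le> 1 / 2 * (1 / \<gamma> n (edge n s i) \<omega>)) \<and>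
        expectation (\<lambda>\<omega>. 1 / 2 * (1 / \<gamma> n (edge n s i) \<omega>)) = 1 / 2 * (1 / (shape n s i - 1)) \<and>
        1 / 2 * (1 / (shape n s i - 1)) \<le> c / 2^n \<and>
        variance (\<lambda>\<omega>. 1 / 2 * (1 / \<gamma> n (edge n s i) \<omega>)) \<le> c / 4^n"
      using sc(1) E mean var by blast
  qed
  then show ?thesis by (rule that)
qed

lemma inverse_gamma_edge_mean_approx:
  assumes \<eta>: "\<eta> > 0"
  shows "\<forall>\<^sub>F n in sequentially. \<forall>s\<in>{1,-1}. \<forall>i\<in>{1..nat \<lfloor>2^n * A\<rfloor>}.
      \<bar>2^n * (1 / 2 * (1 / (shape n s i - 1))) - 1 / L0 (s * real i / 2^n) ^ 2\<bar> \<le> \<eta>"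
proof -
  obtain m B where m: "0 < m" and mB: "\<And>x. x \<in> {-A..A} \<Longrightarrow> m \<le> L0 x \<and> L0 x \<le> B"
    using L0_bounds_Icc by blast
  have B: "0 < B" using mB[of 0] m A_pos by simp
  define \<theta> where "\<theta> = \<eta> * (m\<^sup>2)\<^sup>2 / 4"
  have \<theta>: "\<theta> > 0" unfolding \<theta>_def using \<eta> m by simp
  have "min \<theta> (m\<^sup>2 / 2) > 0" using \<theta> m by simp
  from order_tendstoD(2)[OF LIMSEQ_divide_realpow_zero[of 2 2] this]
  have "\<forall>\<^sub>F n in sequentially. 2 / (2::real)^n < min \<theta> (m\<^sup>2 / 2)" by simp
  with L0_adjacent_close[OF divide_pos_pos[OF \<theta> B]] show ?thesis
  proof (eventually_elim, intro ballI)
    case (elim n)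
    fix s :: real and i :: nat assume s: "s \<in> {1,-1}" and i: "i \<in> {1..nat \<lfloor>2^n * A\<rfloor>}"
    let ?p = "L0 (s * (real i - 1) / 2^n)" and ?q = "L0 (s * real i / 2^n)"
    have pq: "m \<le> ?p" "?q \<le> B" "m \<le> ?q" using mB edge_endpoints_in_Icc[OF s i] by auto
    then have P: "m\<^sup>2 \<le> ?p * ?q" and R: "m\<^sup>2 \<le> ?q ^ 2"
      using m unfolding power2_eq_square by (auto intro!: mult_mono)
    have "?q ^ 2 - ?p * ?q = ?q * (?q - ?p)" by (simp add: power2_eq_square algebra_simps)
    then have "\<bar>?q ^ 2 - ?p * ?q\<bar> = ?q * \<bar>?q - ?p\<bar>"
      using L0_pos[of "s * real i / 2^n"] by (simp add: abs_mult)
    also have "\<dots> \<le> B * (\<theta> / B)"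
      using pq L0_pos[of "s * real i / 2^n"] elim(1) s i by (intro mult_mono) (auto simp: abs_minus_commute)
    finally have RP: "\<bar>?q ^ 2 - ?p * ?q\<bar> \<le> \<theta>" using B by simp
    have "2^n * (1 / 2 * (1 / (shape n s i - 1))) = 1 / (?p * ?q - 2 / 2^n)"
      unfolding shape_def by (simp add: field_simps)
    then have "\<bar>2^n * (1 / 2 * (1 / (shape n s i - 1))) - 1 / ?q ^ 2\<bar>
        \<le> 2 * (\<bar>?q ^ 2 - ?p * ?q\<bar> + 2 / 2^n) / (m\<^sup>2)\<^sup>2"
      using abs_inverse_shift_diff_le[OF _ P R, of "2 / 2^n"] elim(2) m by simp
    also have "\<dots> \<le> 2 * (\<theta> + \<theta>) / (m\<^sup>2)\<^sup>2"
      using RP elim(2) m by (intro divide_right_mono mult_left_mono add_mono) auto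
    also have "\<dots> = \<eta>" unfolding \<theta>_def using m by simp
    finally show "\<bar>2^n * (1 / 2 * (1 / (shape n s i - 1))) - 1 / ?q ^ 2\<bar> \<le> \<eta>" .
  qed
qed

lemma inverse_gamma_edge_sums_tendsto_integral:
  "tendsto_in_prob_zero M (\<lambda>n \<omega>. SUP x\<in>{-A..A} \<inter> dyadic n.
      \<bar>sgn x * (\<Sum>i=1..nat \<lfloor>2^n * \<bar>x\<bar>\<rfloor>. 1 / 2 * (1 / \<gamma> n (edge n (sgn x) i) \<omega>))
        - (LBINT r=0..x. 1 / L0 r ^ 2)\<bar>)"
proof -
  obtain c where moments: "\<forall>\<^sub>F n in sequentially. \<forall>s\<in>{1,-1}. \<forall>i\<in>{1..nat \<lfloor>2^n * A\<rfloor>}.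
      integrable M (\<lambda>\<omega>. (1 / 2 * (1 / \<gamma> n (edge n s i) \<omega>))\<^sup>2) \<and>
      (AE \<omega> in M. 0 \<le> 1 / 2 * (1 / \<gamma> n (edge n s i) \<omega>)) \<and>
      expectation (\<lambda>\<omega>. 1 / 2 * (1 / \<gamma> n (edge n s i) \<omega>)) = 1 / 2 * (1 / (shape n s i - 1)) \<and>
      1 / 2 * (1 / (shape n s i - 1)) \<le> c / 2^n \<and>
      variance (\<lambda>\<omega>. 1 / 2 * (1 / \<gamma> n (edge n s i) \<omega>)) \<le> c / 4^n"
    by (rule inverse_gamma_edge_moments)
  have "\<And>x. L0 x \<noteq> 0" using L0_pos by (metis less_irrefl)
  then show ?thesis
    by (intro rescaled_edge_sums_tendsto_integral[where \<phi>="\<lambda>n t. 1 / 2 * (1 / t)",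
          OF _ _ moments inverse_gamma_edge_mean_approx])
      (auto intro!: continuous_intros L0_cont)
qed

end

theorem mainTheorem12:
  fixes M :: "'a measure" and L0 :: "real \<Rightarrow> real"
    and \<gamma> :: "nat \<Rightarrow> real set \<Rightarrow> 'a \<Rightarrow> real" and A :: real
  assumes "prob_space M"
    and "standing_L0 L0"
    and indep: "\<And>n. prob_space.indep_vars M (\<lambda>_. borel) (\<gamma> n) (dyadic_edges n)"
    and distr: "\<And>n x. x \<in> dyadic n \<Longrightarrow>
       distributed M lborel (\<gamma> n {x - 1 / 2 ^ n, x})
         (\<lambda>t. ennreal (gamma_density (2 ^ n / 2 * L0 (x - 1 / 2 ^ n) * L0 x) t))"
    and "A > 0"
  shows "tendsto_in_prob_zero M (\<lambda>n \<omega>. SUP x\<in>{-A..A} \<inter> dyadic n.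
            \<bar>sgn x * (1 / 2) * (\<Sum>i = 1..nat \<lfloor>2 ^ n * \<bar>x\<bar>\<rfloor>.
                 1 / \<gamma> n {sgn x * (real i - 1) / 2 ^ n, sgn x * real i / 2 ^ n} \<omega>)
             - (LBINT r=0..x. 1 / L0 r ^ 2)\<bar>)
       \<and> tendsto_in_prob_zero M (\<lambda>n \<omega>. SUP x\<in>{-A..A} \<inter> dyadic n.
            \<bar>sgn x * 2 / 4 ^ n * (\<Sum>i = 1..nat \<lfloor>2 ^ n * \<bar>x\<bar>\<rfloor>.
                 \<gamma> n {sgn x * (real i - 1) / 2 ^ n, sgn x * real i / 2 ^ n} \<omega>)
             - (LBINT r=0..x. L0 r ^ 2)\<bar>)"
proof -
  from assms(2) have "continuous_on UNIV L0" "\<And>x. L0 x > 0" unfolding standing_L0_def by auto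
  then interpret dyadic_gamma_edges M L0 \<gamma> A
    using assms(1,5) indep distr by (simp add: dyadic_gamma_edges_def dyadic_gamma_edges_axioms_def)
  have inverse_sum: "sgn x * (1 / 2) * (\<Sum>i = 1..k. 1 / \<gamma> n {sgn x * (real i - 1) / 2 ^ n, sgn x * real i / 2 ^ n} \<omega>)
      = sgn x * (\<Sum>i = 1..k. 1 / 2 * (1 / \<gamma> n (edge n (sgn x) i) \<omega>))"
    and sum: "sgn x * 2 / 4 ^ n * (\<Sum>i = 1..k. \<gamma> n {sgn x * (real i - 1) / 2 ^ n, sgn x * real i / 2 ^ n} \<omega>)
      = sgn x * (\<Sum>i = 1..k. 2 / 4 ^ n * \<gamma> n (edge n (sgn x) i) \<omega>)" for x k n \<omega>
    unfolding edge_def by (simp_all add: sum_distrib_left mult.assoc)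
  show ?thesis
    unfolding inverse_sum sum
    using inverse_gamma_edge_sums_tendsto_integral gamma_edge_sums_tendsto_integral ..
qed

end
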